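(* Let $G$ be an abelian group and let $V$ be a finite-dimensional unipotent representation of $G$ over a field $\Bbbk$ of characteristic $0$. Then for every finite-index subgroup $G'<G$, the inclusion $G'\hookrightarrow G$ induces isomorphisms $\mathrm H_k(G';V)\cong\mathrm H_k(G;V)$ for all $k\ge0$.
   Context: A linear operator is unipotent if it is $\mathrm{id}+\phi$ with $\phi$ nilpotent; a representation is unipotent if every group element acts by a unipotent operator. *)

theory Defs
  imports "HOL-Algebra.Coset" "HOL.Vector_Spaces"
begin

text \<open>Bar complex for group homology H_k(G;V) of a group G (HOL-Algebra) with
 coefficients in a left representation rho on a vector space of type 'v.\<close>

definition hchain :: "'g set \<Rightarrow> nat \<Rightarrow> ('g list \<Rightarrow> 'v::ab_group_add) \<Rightarrow> bool" where
  "hchain S k c \<longleftrightarrow> finite {\<sigma>. c \<sigma> \<noteq> 0} \<and>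
     (\<forall>\<sigma>. c \<sigma> \<noteq> 0 \<longrightarrow> length \<sigma> = k \<and> set \<sigma> \<subseteq> S)"

definition bar_face :: "('g, 'b) monoid_scheme \<Rightarrow> nat \<Rightarrow> 'g list \<Rightarrow> 'g list" where
  "bar_face G i \<sigma> =
     (if i = 0 then tl \<sigma>
      else if i < length \<sigma> then take (i - 1) \<sigma> @ [\<sigma> ! (i - 1) \<otimes>\<^bsub>G\<^esub> \<sigma> ! i] @ drop (i + 1) \<sigma>
      else butlast \<sigma>)"

text \<open>Boundary C_k \<rightarrow> C_(k-1):
  d(v \<otimes> [g1|..|gk]) = g1\<inverse>v \<otimes> [g2|..|gk] + \<Sum>_{0<i<k} (-1)^i v \<otimes> [..|g_i g_(i+1)|..]
    + (-1)^k v \<otimes> [g1|..|g_(k-1)], and d = 0 on C_0.\<close>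
definition bar_bd :: "('g, 'b) monoid_scheme \<Rightarrow> ('g \<Rightarrow> 'v \<Rightarrow> 'v) \<Rightarrow> nat
                      \<Rightarrow> ('g list \<Rightarrow> 'v::ab_group_add) \<Rightarrow> ('g list \<Rightarrow> 'v)" where
  "bar_bd G \<rho> k c =
     (if k = 0 then (\<lambda>_. 0) else
      (\<lambda>\<tau>. \<Sum>\<sigma>\<in>{\<sigma>. c \<sigma> \<noteq> 0}. \<Sum>i\<in>{0..k}.
          if bar_face G i \<sigma> = \<tau> then
            (let x = (if i = 0 then \<rho> (inv\<^bsub>G\<^esub> (\<sigma> ! 0)) (c \<sigma>) else c \<sigma>)
             in if even i then x else - x)
          else 0))"

definition hcycle :: "('g, 'b) monoid_scheme \<Rightarrow> ('g \<Rightarrow> 'v \<Rightarrow> 'v) \<Rightarrow> 'g set \<Rightarrow> nat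
                      \<Rightarrow> ('g list \<Rightarrow> 'v::ab_group_add) \<Rightarrow> bool" where
  "hcycle G \<rho> S k c \<longleftrightarrow> hchain S k c \<and> bar_bd G \<rho> k c = (\<lambda>_. 0)"

definition hboundary :: "('g, 'b) monoid_scheme \<Rightarrow> ('g \<Rightarrow> 'v \<Rightarrow> 'v) \<Rightarrow> 'g set \<Rightarrow> nat
                      \<Rightarrow> ('g list \<Rightarrow> 'v::ab_group_add) \<Rightarrow> bool" where
  "hboundary G \<rho> S k c \<longleftrightarrow> (\<exists>d. hchain S (Suc k) d \<and> bar_bd G \<rho> (Suc k) d = c)"

text \<open>The map H_k(H;V) \<rightarrow> H_k(G;V) induced by the inclusion of the subgroup H
  (on chains: the identity, viewing H-tuples as G-tuples) is bijective,
  i.e. surjective and injective on cycles modulo boundaries.\<close>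
definition inclusion_induces_iso_Hk ::
  "('g, 'b) monoid_scheme \<Rightarrow> ('g \<Rightarrow> 'v \<Rightarrow> 'v) \<Rightarrow> 'g set \<Rightarrow> nat \<Rightarrow> 'v::ab_group_add itself \<Rightarrow> bool" where
  "inclusion_induces_iso_Hk G \<rho> H k _ \<longleftrightarrow>
     (\<forall>z::'g list \<Rightarrow> 'v. hcycle G \<rho> (carrier G) k z \<longrightarrow>
        (\<exists>z'. hcycle G \<rho> H k z' \<and> hboundary G \<rho> (carrier G) k (z' - z))) \<and>
     (\<forall>z'::'g list \<Rightarrow> 'v. hcycle G \<rho> H k z' \<and> hboundary G \<rho> (carrier G) k z'
        \<longrightarrow> hboundary G \<rho> H k z')"

end

theory Submission
  imports Defs "HOL-Library.Function_Algebras"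
begin

text \<open>
  Homogeneous chains are formal sums of tuples \<open>[x\<^sub>0, \<dots>, x\<^sub>k]\<close> of group elements with
  coefficients in \<open>V\<close>; the bar chain \<open>[g\<^sub>1|\<dots>|g\<^sub>k] \<otimes> v\<close> is the coinvariant class of
  \<open>[1, g\<^sub>1, g\<^sub>1g\<^sub>2, \<dots>] \<otimes> v\<close>.  Choose representatives \<open>T\<close> of the cosets of \<open>H\<close>, with
  \<open>r(y) \<in> T\<close> the representative of \<open>yH\<close>.  For \<open>t \<in> T\<close> the map \<open>y \<mapsto> y r(t\<inverse>y)\<inverse>\<close> moves
  \<open>G\<close> into the coset \<open>tH\<close>, and left translation only permutes these maps.  Summing the
  induced chain maps over \<open>T\<close> therefore gives a chain map on coinvariants, the transfer,
  whose image consists of \<open>H\<close>-chains; the prism operator shows that on \<open>G\<close>-cycles it is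
  homologous to multiplication by the index \<open>[G:H] = |T|\<close>.  Dividing by the index
  (characteristic 0) shows that the map on homology is onto.  On \<open>H\<close>-chains the transfer
  acts on coefficients by \<open>\<Sum>\<^sub>t \<rho>(r(t\<inverse>)) = |T| + N\<close> with \<open>N\<close> nilpotent, because the
  \<open>\<rho>(g) - 1\<close> are commuting nilpotents; this operator is invertible by a polynomial in \<open>N\<close>,
  which gives injectivity.
\<close>

section \<open>Finitely supported chains\<close>

definition supp :: "('x \<Rightarrow> 'v::zero) \<Rightarrow> 'x set" where
  "supp c = {\<sigma>. c \<sigma> \<noteq> 0}"

definition finsupp :: "('x \<Rightarrow> 'v::zero) \<Rightarrow> bool" where
  "finsupp c \<longleftrightarrow> finite (supp c)"

definition single :: "'x \<Rightarrow> 'v::zero \<Rightarrow> 'x \<Rightarrow> 'v" where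
  "single \<sigma> v = (\<lambda>\<tau>. if \<tau> = \<sigma> then v else 0)"

definition supp_in :: "('x \<Rightarrow> bool) \<Rightarrow> ('x \<Rightarrow> 'v::zero) \<Rightarrow> bool" where
  "supp_in P c \<longleftrightarrow> (\<forall>\<sigma>. c \<sigma> \<noteq> 0 \<longrightarrow> P \<sigma>)"

definition chain_additive :: "(('x \<Rightarrow> 'v::ab_group_add) \<Rightarrow> ('y \<Rightarrow> 'w::ab_group_add)) \<Rightarrow> bool" where
  "chain_additive L \<longleftrightarrow> L 0 = 0 \<and>
     (\<forall>a b. finsupp a \<longrightarrow> finsupp b \<longrightarrow> L (a + b) = L a + L b) \<and>
     (\<forall>a. finsupp a \<longrightarrow> finsupp (L a))"

definition linext :: "('x \<Rightarrow> 'v::zero \<Rightarrow> 'y \<Rightarrow> 'w::comm_monoid_add) \<Rightarrow> ('x \<Rightarrow> 'v) \<Rightarrow> 'y \<Rightarrow> 'w" where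
  "linext F c = (\<Sum>\<sigma>\<in>supp c. F \<sigma> (c \<sigma>))"

definition additive_gen :: "('x \<Rightarrow> 'v::ab_group_add \<Rightarrow> 'y \<Rightarrow> 'w::ab_group_add) \<Rightarrow> bool" where
  "additive_gen F \<longleftrightarrow> (\<forall>\<sigma> a b. F \<sigma> (a + b) = F \<sigma> a + F \<sigma> b) \<and> (\<forall>\<sigma> v. finsupp (F \<sigma> v))"

lemma sum_apply: "(\<Sum>a\<in>A. f a) x = (\<Sum>a\<in>A. f a x)"
  by (induction A rule: infinite_finite_induct) auto

lemma finsupp_zero [simp]: "finsupp (0 :: 'x \<Rightarrow> 'v::ab_group_add)"
  by (simp add: finsupp_def supp_def)

lemma finsupp_add [simp]: "finsupp (a :: 'x \<Rightarrow> 'v::ab_group_add) \<Longrightarrow> finsupp b \<Longrightarrow> finsupp (a + b)"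
  unfolding finsupp_def supp_def
  by (rule finite_subset[of _ "{\<sigma>. a \<sigma> \<noteq> 0} \<union> {\<sigma>. b \<sigma> \<noteq> 0}"]) auto

lemma finsupp_uminus [simp]: "finsupp (- a) = finsupp (a :: 'x \<Rightarrow> 'v::ab_group_add)"
  unfolding finsupp_def supp_def by simp

lemma finsupp_diff [simp]: "finsupp (a :: 'x \<Rightarrow> 'v::ab_group_add) \<Longrightarrow> finsupp b \<Longrightarrow> finsupp (a - b)"
  using finsupp_add[of a "- b"] by simp

lemma finsupp_sum [simp]:
  "(\<And>i. i \<in> I \<Longrightarrow> finsupp (f i :: 'x \<Rightarrow> 'v::ab_group_add)) \<Longrightarrow> finsupp (\<Sum>i\<in>I. f i)"
  by (induction I rule: infinite_finite_induct) auto

lemma finsupp_single [simp]: "finsupp (single \<sigma> v)"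
  unfolding finsupp_def supp_def single_def by (rule finite_subset[of _ "{\<sigma>}"]) auto

lemma finsupp_comp: "finsupp c \<Longrightarrow> f 0 = 0 \<Longrightarrow> finsupp (\<lambda>\<sigma>. f (c \<sigma>))"
  unfolding finsupp_def supp_def by (rule finite_subset[of _ "{\<sigma>. c \<sigma> \<noteq> 0}"]) auto

lemma single_add: "single \<sigma> (a + b :: 'v::ab_group_add) = single \<sigma> a + single \<sigma> b"
  by (auto simp: single_def)

lemma single_zero [simp]: "single \<sigma> 0 = 0"
  by (auto simp: single_def)

lemma single_uminus: "single \<sigma> (- a :: 'v::ab_group_add) = - single \<sigma> a"
  by (auto simp: single_def fun_eq_iff)

lemma single_sum: "single \<sigma> (\<Sum>i\<in>I. f i :: 'v::ab_group_add) = (\<Sum>i\<in>I. single \<sigma> (f i))"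
  by (induction I rule: infinite_finite_induct) (auto simp: single_add)

lemma additive_gen_zero: "additive_gen F \<Longrightarrow> F \<sigma> 0 = 0"
  unfolding additive_gen_def by (metis add_cancel_right_right add_0)

lemma linext_superset:
  assumes "additive_gen F" "finite S" "supp c \<subseteq> S"
  shows "linext F c = (\<Sum>\<sigma>\<in>S. F \<sigma> (c \<sigma>))"
  unfolding linext_def
  by (rule sum.mono_neutral_left) (use assms additive_gen_zero[OF assms(1)] in
      \<open>auto simp: supp_def\<close>)

lemma linext_add:
  assumes "additive_gen F" "finsupp a" "finsupp b"
  shows "linext F (a + b) = linext F a + linext F b"
proof -
  let ?S = "supp a \<union> supp b"
  have fin: "finite ?S"
    using assms by (auto simp: finsupp_def)
  have "linext F (a + b) = (\<Sum>\<sigma>\<in>?S. F \<sigma> ((a + b) \<sigma>))"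
    by (rule linext_superset[OF assms(1) fin]) (auto simp: supp_def)
  also have "\<dots> = (\<Sum>\<sigma>\<in>?S. F \<sigma> (a \<sigma>)) + (\<Sum>\<sigma>\<in>?S. F \<sigma> (b \<sigma>))"
    using assms(1) by (simp add: additive_gen_def sum.distrib)
  also have "\<dots> = linext F a + linext F b"
    using linext_superset[OF assms(1) fin, of a] linext_superset[OF assms(1) fin, of b] by auto
  finally show ?thesis .
qed

lemma linext_zero [simp]: "linext F 0 = 0"
  by (simp add: linext_def supp_def)

lemma linext_single: "additive_gen F \<Longrightarrow> linext F (single \<sigma> v) = F \<sigma> v"
proof (cases "v = 0")
  case True
  assume "additive_gen F"
  then show ?thesis
    using True additive_gen_zero by simp
next
  case False
  then have "supp (single \<sigma> v) = {\<sigma>}"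
    by (auto simp: supp_def single_def)
  then show ?thesis
    by (simp add: linext_def single_def)
qed

lemma finsupp_linext: "additive_gen F \<Longrightarrow> finsupp (linext F c)"
  unfolding linext_def additive_gen_def by (auto intro!: finsupp_sum)

lemma chain_additive_linext: "additive_gen F \<Longrightarrow> chain_additive (linext F)"
  unfolding chain_additive_def using linext_add finsupp_linext by auto

lemma chain_additive_zero: "chain_additive L \<Longrightarrow> L 0 = 0"
  by (simp add: chain_additive_def)

lemma chain_additive_add: "chain_additive L \<Longrightarrow> finsupp a \<Longrightarrow> finsupp b \<Longrightarrow> L (a + b) = L a + L b"
  by (simp add: chain_additive_def)

lemma chain_additive_finsupp: "chain_additive L \<Longrightarrow> finsupp a \<Longrightarrow> finsupp (L a)"
  by (simp add: chain_additive_def)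

lemma chain_additive_uminus:
  assumes "chain_additive L" "finsupp a"
  shows "L (- a) = - L a"
proof -
  have "L a + L (- a) = 0"
    using chain_additive_add[OF assms, of "- a"] assms chain_additive_zero[OF assms(1)] by simp
  then show ?thesis
    by (simp add: eq_neg_iff_add_eq_0 add.commute)
qed

lemma chain_additive_diff: "chain_additive L \<Longrightarrow> finsupp a \<Longrightarrow> finsupp b \<Longrightarrow> L (a - b) = L a - L b"
  using chain_additive_add[of L a "- b"] chain_additive_uminus[of L b] by simp

lemma chain_additive_sum:
  "chain_additive L \<Longrightarrow> (\<And>i. i \<in> I \<Longrightarrow> finsupp (f i)) \<Longrightarrow> L (\<Sum>i\<in>I. f i) = (\<Sum>i\<in>I. L (f i))"
  by (induction I rule: infinite_finite_induct) (auto simp: chain_additive_zero chain_additive_add)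

lemma chain_additive_id: "chain_additive (\<lambda>c. c)"
  by (simp add: chain_additive_def)

lemma chain_additive_comp: "chain_additive L1 \<Longrightarrow> chain_additive L2 \<Longrightarrow> chain_additive (\<lambda>c. L1 (L2 c))"
  unfolding chain_additive_def by auto

lemma chain_additive_plus: "chain_additive L1 \<Longrightarrow> chain_additive L2
  \<Longrightarrow> chain_additive (\<lambda>c. L1 c + L2 c)"
  unfolding chain_additive_def by (auto simp: algebra_simps)

lemma chain_additive_minus: "chain_additive L1 \<Longrightarrow> chain_additive L2
  \<Longrightarrow> chain_additive (\<lambda>c. L1 c - L2 c)"
  unfolding chain_additive_def by (auto simp: algebra_simps)

lemma chain_additive_sum_maps:
  "(\<And>t. t \<in> T \<Longrightarrow> chain_additive (L t)) \<Longrightarrow> chain_additive (\<lambda>c. \<Sum>t\<in>T. L t c)"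
  by (induction T rule: infinite_finite_induct) (auto simp: chain_additive_def sum.distrib)

lemma chain_additive_pointwise:
  assumes "\<And>a b. f (a + b) = f a + f b"
  shows "chain_additive (\<lambda>c \<sigma>. f (c \<sigma>))"
proof -
  have "f 0 = 0"
    using assms by (metis add_cancel_right_right add_0)
  then show ?thesis
    using assms unfolding chain_additive_def by (auto simp: finsupp_comp fun_eq_iff zero_fun_def)
qed

lemma finsupp_decomp: "finsupp c \<Longrightarrow> c = (\<Sum>\<sigma>\<in>supp c. single \<sigma> (c \<sigma>))"
  unfolding finsupp_def
  by (rule ext) (auto simp: sum_apply single_def supp_def if_distrib sum.delta cong: if_cong)

lemma chain_additive_decomp:
  "chain_additive L \<Longrightarrow> finsupp c \<Longrightarrow> L c = (\<Sum>\<sigma>\<in>supp c. L (single \<sigma> (c \<sigma>)))"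
  by (subst finsupp_decomp, assumption) (simp add: chain_additive_sum)

lemma chain_additive_eqI:
  assumes "chain_additive L1" "chain_additive L2" "finsupp c"
    and "\<And>\<sigma>. c \<sigma> \<noteq> 0 \<Longrightarrow> L1 (single \<sigma> (c \<sigma>)) = L2 (single \<sigma> (c \<sigma>))"
  shows "L1 c = L2 c"
  using chain_additive_decomp[OF assms(1,3)] chain_additive_decomp[OF assms(2,3)] assms(4)
  by (simp add: supp_def)

lemma supp_in_zero [simp]: "supp_in P 0"
  by (simp add: supp_in_def)

lemma supp_in_add: "supp_in P a \<Longrightarrow> supp_in P b \<Longrightarrow> supp_in P (a + (b :: 'x \<Rightarrow> 'v::ab_group_add))"
  unfolding supp_in_def plus_fun_apply by (metis add.right_neutral)

lemma supp_in_sum: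
  "(\<And>i. i \<in> I \<Longrightarrow> supp_in P (f i)) \<Longrightarrow> supp_in P (\<Sum>i\<in>I. f i :: 'x \<Rightarrow> 'v::ab_group_add)"
  by (induction I rule: infinite_finite_induct) (auto intro!: supp_in_add)

lemma supp_in_single: "(v \<noteq> 0 \<Longrightarrow> P \<sigma>) \<Longrightarrow> supp_in P (single \<sigma> v)"
  by (auto simp: supp_in_def single_def)

lemma supp_in_chain_additive:
  assumes "chain_additive L" "finsupp c"
    and "\<And>\<sigma>. c \<sigma> \<noteq> 0 \<Longrightarrow> supp_in P (L (single \<sigma> (c \<sigma>)))"
  shows "supp_in P (L c)"
  using chain_additive_decomp[OF assms(1,2)] assms(3) by (auto intro!: supp_in_sum simp: supp_def)

lemma hchain_iff: "hchain S k c \<longleftrightarrow> finsupp c \<and> supp_in (\<lambda>\<sigma>. length \<sigma> = k \<and> set \<sigma> \<subseteq> S) c"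
  by (auto simp: hchain_def finsupp_def supp_def supp_in_def)

section \<open>Homogeneous chains and the prism operator\<close>

text \<open>
  The homogeneous boundary \<open>[x\<^sub>0, \<dots>, x\<^sub>k] \<mapsto> \<Sum>\<^sub>i (-1)\<^sup>i [\<dots>, x\<^sub>i\<^sub>-\<^sub>1, x\<^sub>i\<^sub>+\<^sub>1, \<dots>]\<close> does
  not involve the group action, and the prism operator
  \<open>[x\<^sub>0, \<dots>, x\<^sub>k] \<mapsto> \<Sum>\<^sub>i (-1)\<^sup>i [\<alpha> x\<^sub>0, \<dots>, \<alpha> x\<^sub>i, x\<^sub>i, \<dots>, x\<^sub>k]\<close> is a chain homotopy from the
  identity to the map induced by an arbitrary function \<open>\<alpha>\<close>.
\<close>

definition alt_sign :: "nat \<Rightarrow> 'v::ab_group_add \<Rightarrow> 'v" where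
  "alt_sign i v = (if even i then v else - v)"

lemma alt_sign_add: "alt_sign i (a + b) = alt_sign i a + alt_sign i b"
  by (simp add: alt_sign_def)

lemma alt_sign_zero [simp]: "alt_sign i 0 = 0"
  by (simp add: alt_sign_def)

lemma alt_sign_Suc: "alt_sign (Suc i) v = - alt_sign i v"
  by (simp add: alt_sign_def)

lemma alt_sign_0 [simp]: "alt_sign 0 v = v"
  by (simp add: alt_sign_def)

definition hom_bd_gen :: "'g list \<Rightarrow> 'v::ab_group_add \<Rightarrow> 'g list \<Rightarrow> 'v" where
  "hom_bd_gen x v = (\<Sum>i<length x. single (take i x @ drop (Suc i) x) (alt_sign i v))"

definition hom_bd :: "('g list \<Rightarrow> 'v::ab_group_add) \<Rightarrow> 'g list \<Rightarrow> 'v" where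
  "hom_bd = linext hom_bd_gen"

definition cons_chain :: "'g \<Rightarrow> ('g list \<Rightarrow> 'v::ab_group_add) \<Rightarrow> 'g list \<Rightarrow> 'v" where
  "cons_chain a = linext (\<lambda>x v. single (a # x) v)"

definition map_chain :: "('g \<Rightarrow> 'g) \<Rightarrow> ('g list \<Rightarrow> 'v::ab_group_add) \<Rightarrow> 'g list \<Rightarrow> 'v" where
  "map_chain \<alpha> = linext (\<lambda>x v. single (map \<alpha> x) v)"

definition prism_gen :: "('g \<Rightarrow> 'g) \<Rightarrow> 'g list \<Rightarrow> 'v::ab_group_add \<Rightarrow> 'g list \<Rightarrow> 'v" where
  "prism_gen \<alpha> x v = (\<Sum>i<length x. single (take (Suc i) (map \<alpha> x) @ drop i x) (alt_sign i v))"

definition prism :: "('g \<Rightarrow> 'g) \<Rightarrow> ('g list \<Rightarrow> 'v::ab_group_add) \<Rightarrow> 'g list \<Rightarrow> 'v" where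
  "prism \<alpha> = linext (prism_gen \<alpha>)"

lemma additive_gen_hom_bd_gen: "additive_gen hom_bd_gen"
  by (auto simp: additive_gen_def hom_bd_gen_def alt_sign_add single_add sum.distrib)

lemma additive_gen_prism_gen: "additive_gen (prism_gen \<alpha>)"
  by (auto simp: additive_gen_def prism_gen_def alt_sign_add single_add sum.distrib)

lemma additive_gen_single: "additive_gen (\<lambda>x v. single (f x) v)"
  by (auto simp: additive_gen_def single_add)

lemma chain_additive_hom_bd: "chain_additive hom_bd"
  by (simp add: hom_bd_def chain_additive_linext additive_gen_hom_bd_gen)

lemma chain_additive_cons_chain: "chain_additive (cons_chain a)"
  by (simp add: cons_chain_def chain_additive_linext additive_gen_single)

lemma chain_additive_map_chain: "chain_additive (map_chain \<alpha>)"
  by (simp add: map_chain_def chain_additive_linext additive_gen_single)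

lemma chain_additive_prism: "chain_additive (prism \<alpha>)"
  by (simp add: prism_def chain_additive_linext additive_gen_prism_gen)

lemma hom_bd_single: "hom_bd (single x v) = hom_bd_gen x v"
  by (simp add: hom_bd_def linext_single additive_gen_hom_bd_gen)

lemma cons_chain_single: "cons_chain a (single x v) = single (a # x) v"
  by (simp add: cons_chain_def linext_single additive_gen_single)

lemma map_chain_single: "map_chain \<alpha> (single x v) = single (map \<alpha> x) v"
  by (simp add: map_chain_def linext_single additive_gen_single)

lemma prism_single: "prism \<alpha> (single x v) = prism_gen \<alpha> x v"
  by (simp add: prism_def linext_single additive_gen_prism_gen)

lemma hom_bd_gen_Nil [simp]: "hom_bd_gen [] v = 0"
  by (simp add: hom_bd_gen_def)

lemma prism_gen_Nil [simp]: "prism_gen \<alpha> [] v = 0"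
  by (simp add: prism_gen_def)

lemma finsupp_hom_bd [simp]: "finsupp c \<Longrightarrow> finsupp (hom_bd c)"
  by (rule chain_additive_finsupp[OF chain_additive_hom_bd])

lemma finsupp_cons_chain [simp]: "finsupp c \<Longrightarrow> finsupp (cons_chain a c)"
  by (rule chain_additive_finsupp[OF chain_additive_cons_chain])

lemma finsupp_map_chain [simp]: "finsupp c \<Longrightarrow> finsupp (map_chain \<alpha> c)"
  by (rule chain_additive_finsupp[OF chain_additive_map_chain])

lemma finsupp_prism [simp]: "finsupp c \<Longrightarrow> finsupp (prism \<alpha> c)"
  by (rule chain_additive_finsupp[OF chain_additive_prism])

lemma hom_bd_gen_Cons: "hom_bd_gen (a # x) v = single x v - cons_chain a (hom_bd_gen x v)"
proof -
  let ?tail = "\<Sum>i<length x. single (a # (take i x @ drop (Suc i) x)) (alt_sign (Suc i) v)"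
  have "hom_bd_gen (a # x) v = single x v + ?tail"
    unfolding hom_bd_gen_def length_Cons sum.lessThan_Suc_shift by simp
  also have "?tail = - cons_chain a (hom_bd_gen x v)"
    unfolding hom_bd_gen_def
    by (simp add: chain_additive_sum[OF chain_additive_cons_chain] cons_chain_single alt_sign_Suc
        single_uminus sum_negf)
  finally show ?thesis
    by (simp only: diff_conv_add_uminus)
qed

lemma prism_gen_Cons:
  "prism_gen \<alpha> (a # x) v = single (\<alpha> a # a # x) v - cons_chain (\<alpha> a) (prism_gen \<alpha> x v)"
proof -
  let ?tail = "\<Sum>i<length x. single (\<alpha> a # (take (Suc i) (map \<alpha> x) @ drop i x)) (alt_sign (Suc i) v)"
  have "prism_gen \<alpha> (a # x) v = single (\<alpha> a # a # x) v + ?tail"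
    unfolding prism_gen_def length_Cons sum.lessThan_Suc_shift by simp
  also have "?tail = - cons_chain (\<alpha> a) (prism_gen \<alpha> x v)"
    unfolding prism_gen_def
    by (simp add: chain_additive_sum[OF chain_additive_cons_chain] cons_chain_single alt_sign_Suc
        single_uminus sum_negf)
  finally show ?thesis
    by (simp only: diff_conv_add_uminus)
qed

lemma hom_bd_cons_chain: "finsupp Y \<Longrightarrow> hom_bd (cons_chain a Y) = Y - cons_chain a (hom_bd Y)"
  by (rule chain_additive_eqI[OF
        chain_additive_comp[OF chain_additive_hom_bd chain_additive_cons_chain]
        chain_additive_minus[OF chain_additive_id
          chain_additive_comp[OF chain_additive_cons_chain chain_additive_hom_bd]]])
    (simp_all add: cons_chain_single hom_bd_single hom_bd_gen_Cons)

lemma prism_cons_chain: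
  "finsupp Z \<Longrightarrow>
    prism \<alpha> (cons_chain a Z) = cons_chain (\<alpha> a) (cons_chain a Z) - cons_chain (\<alpha> a) (prism \<alpha> Z)"
  by (rule chain_additive_eqI[OF
        chain_additive_comp[OF chain_additive_prism chain_additive_cons_chain]
        chain_additive_minus[OF
          chain_additive_comp[OF chain_additive_cons_chain chain_additive_cons_chain]
          chain_additive_comp[OF chain_additive_cons_chain chain_additive_prism]]])
    (simp_all add: cons_chain_single prism_single prism_gen_Cons)

lemma prism_homotopy_single:
  "hom_bd (prism \<alpha> (single x v)) + prism \<alpha> (hom_bd (single x v))
    = single x v - map_chain \<alpha> (single x v)"
proof (induction x arbitrary: v)
  case Nil
  have "prism \<alpha> (single [] v) = 0" "hom_bd (single [] v) = 0"
    by (simp_all add: prism_single hom_bd_single)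
  moreover have "map_chain \<alpha> (single [] v) = single [] v"
    by (simp add: map_chain_single)
  ultimately show ?case
    by (metis chain_additive_zero[OF chain_additive_prism]
        chain_additive_zero[OF chain_additive_hom_bd]
        add_0 diff_self)
next
  case (Cons x0 x')
  define a where "a = \<alpha> x0"
  define Y where "Y = single x' v"
  define X where "X = single (x0 # x') v"
  have fY: "finsupp Y" and fX: "finsupp X"
    by (simp_all add: Y_def X_def)
  have IH: "hom_bd (prism \<alpha> Y) + prism \<alpha> (hom_bd Y) = Y - map_chain \<alpha> Y"
    unfolding Y_def by (rule Cons.IH)
  have prism_X: "prism \<alpha> X = cons_chain a X - cons_chain a (prism \<alpha> Y)"
    by (simp add: X_def Y_def prism_single prism_gen_Cons cons_chain_single a_def)
  have hom_bd_X: "hom_bd X = Y - cons_chain x0 (hom_bd Y)"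
    using hom_bd_cons_chain[OF fY] by (simp add: X_def Y_def cons_chain_single)
  have map_X: "map_chain \<alpha> X = cons_chain a (map_chain \<alpha> Y)"
    by (simp add: X_def Y_def map_chain_single cons_chain_single a_def)
  have e1: "hom_bd (prism \<alpha> X)
      = (X - cons_chain a (hom_bd X)) - (prism \<alpha> Y - cons_chain a (hom_bd (prism \<alpha> Y)))"
    unfolding prism_X
      by (simp add: chain_additive_diff[OF chain_additive_hom_bd] hom_bd_cons_chain fX fY)
  have e2: "prism \<alpha> (hom_bd X)
      = prism \<alpha> Y - (cons_chain a (cons_chain x0 (hom_bd Y)) - cons_chain a (prism \<alpha> (hom_bd Y)))"
    unfolding hom_bd_X
      by (simp add: chain_additive_diff[OF chain_additive_prism] prism_cons_chain fY a_def)
  have e3: "cons_chain a (hom_bd X) = cons_chain a Y - cons_chain a (cons_chain x0 (hom_bd Y))"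
    unfolding hom_bd_X by (simp add: chain_additive_diff[OF chain_additive_cons_chain] fY)
  have "cons_chain a (hom_bd (prism \<alpha> Y)) + cons_chain a (prism \<alpha> (hom_bd Y))
      = cons_chain a Y - cons_chain a (map_chain \<alpha> Y)"
    using IH fY chain_additive_add[OF chain_additive_cons_chain] chain_additive_diff[OF
        chain_additive_cons_chain]
    by (metis finsupp_hom_bd finsupp_prism finsupp_map_chain)
  then have e4: "cons_chain a (hom_bd (prism \<alpha> Y))
      = cons_chain a Y - cons_chain a (map_chain \<alpha> Y) - cons_chain a (prism \<alpha> (hom_bd Y))"
    by (simp add: algebra_simps)
  have "hom_bd (prism \<alpha> X) + prism \<alpha> (hom_bd X) = X - map_chain \<alpha> X"
    unfolding e1 e2 e3 e4 map_X by (simp add: algebra_simps)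
  then show ?case
    by (simp add: X_def)
qed

lemma prism_homotopy: "finsupp c \<Longrightarrow> hom_bd (prism \<alpha> c) + prism \<alpha> (hom_bd c) = c - map_chain \<alpha> c"
  by (rule chain_additive_eqI[OF
        chain_additive_plus[OF chain_additive_comp[OF chain_additive_hom_bd chain_additive_prism]
          chain_additive_comp[OF chain_additive_prism chain_additive_hom_bd]]
        chain_additive_minus[OF chain_additive_id chain_additive_map_chain]])
    (simp_all add: prism_homotopy_single)

lemma hom_bd_gen_map: "hom_bd_gen (map \<alpha> x) v = map_chain \<alpha> (hom_bd_gen x v)"
  unfolding hom_bd_gen_def
  by (simp add: chain_additive_sum[OF chain_additive_map_chain] map_chain_single take_map drop_map)

lemma hom_bd_map_chain: "finsupp c \<Longrightarrow> hom_bd (map_chain \<alpha> c) = map_chain \<alpha> (hom_bd c)"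
  by (rule chain_additive_eqI[OF chain_additive_comp[OF chain_additive_hom_bd chain_additive_map_chain]
        chain_additive_comp[OF chain_additive_map_chain chain_additive_hom_bd]])
    (simp_all add: hom_bd_single map_chain_single hom_bd_gen_map)

lemma supp_in_hom_bd:
  assumes a: "finsupp X" "supp_in P X"
    "\<And>x i. P x \<Longrightarrow> i < length x \<Longrightarrow> Q (take i x @ drop (Suc i) x)"
  shows "supp_in Q (hom_bd X)"
proof (rule supp_in_chain_additive[OF chain_additive_hom_bd a(1)])
  fix \<sigma> assume "X \<sigma> \<noteq> 0"
  then have "P \<sigma>" using a(2) by (simp add: supp_in_def)
  then show "supp_in Q (hom_bd (single \<sigma> (X \<sigma>)))" using a(3)
    by (auto simp: hom_bd_single hom_bd_gen_def intro!: supp_in_sum supp_in_single)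
qed

lemma supp_in_prism:
  assumes a: "finsupp X" "supp_in P X"
    "\<And>x i. P x \<Longrightarrow> i < length x \<Longrightarrow> Q (take (Suc i) (map \<alpha> x) @ drop i x)"
  shows "supp_in Q (prism \<alpha> X)"
proof (rule supp_in_chain_additive[OF chain_additive_prism a(1)])
  fix \<sigma> assume "X \<sigma> \<noteq> 0"
  then have "P \<sigma>" using a(2) by (simp add: supp_in_def)
  then show "supp_in Q (prism \<alpha> (single \<sigma> (X \<sigma>)))" using a(3)
    by (auto simp: prism_single prism_gen_def intro!: supp_in_sum supp_in_single)
qed

section \<open>Sums of commuting nilpotent operators\<close>

definition is_add_hom :: "('v::ab_group_add \<Rightarrow> 'v) \<Rightarrow> bool" where
  "is_add_hom f \<longleftrightarrow> (\<forall>x y. f (x + y) = f x + f y)"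

lemma is_add_hom_zero: "is_add_hom f \<Longrightarrow> f 0 = 0"
  unfolding is_add_hom_def by (metis add_cancel_right_right add_0)

lemma is_add_hom_sum: "is_add_hom f \<Longrightarrow> f (\<Sum>i\<in>I. g i) = (\<Sum>i\<in>I. f (g i))"
  by (induction I rule: infinite_finite_induct) (auto simp: is_add_hom_zero is_add_hom_def)

lemma is_add_hom_pow: "is_add_hom f \<Longrightarrow> is_add_hom (f ^^ n)"
  by (induction n) (auto simp: is_add_hom_def)

lemma is_add_hom_pow_zero: "is_add_hom f \<Longrightarrow> (f ^^ n) 0 = 0"
  using is_add_hom_zero[OF is_add_hom_pow] by blast

lemma is_add_hom_uminus: "is_add_hom f \<Longrightarrow> f (- x) = - f x"
  using is_add_hom_zero[of f] unfolding is_add_hom_def by (metis add.right_inverse add_eq_0_iff)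

lemma is_add_hom_diff: "is_add_hom f \<Longrightarrow> f (x - y) = f x - f y"
  using is_add_hom_uminus[of f y] unfolding is_add_hom_def by (metis diff_conv_add_uminus)

text \<open>
  The binomial expansion of \<open>(a + b)\<^sup>n a\<^sup>i b\<^sup>j\<close> only has terms \<open>a\<^sup>i\<^sup>' b\<^sup>j\<^sup>'\<close>
  with \<open>i' + j' = n + i + j\<close>.
\<close>

lemma funpow_add_commuting_vanishes:
  fixes a b :: "'v::ab_group_add \<Rightarrow> 'v"
  assumes a: "is_add_hom a" and b: "is_add_hom b" and ab: "\<And>x. a (b x) = b (a x)"
    and a_nil: "a ^^ p = (\<lambda>v. 0)" and b_nil: "b ^^ q = (\<lambda>v. 0)"
    and "p + q \<le> n + i + j"
  shows "((\<lambda>v. a v + b v) ^^ n) ((a ^^ i) ((b ^^ j) x)) = 0"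
  using assms(6)
proof (induction n arbitrary: i j)
  case 0
  then consider "p \<le> i" | "q \<le> j"
    by linarith
  then show ?case
  proof cases
    case 1
    then have "a ^^ i = (a ^^ (i - p)) \<circ> (a ^^ p)"
      by (simp add: funpow_add[symmetric])
    then show ?thesis
      using a_nil is_add_hom_pow_zero[OF a] by simp
  next
    case 2
    then have "b ^^ j = (b ^^ (j - q)) \<circ> (b ^^ q)"
      by (simp add: funpow_add[symmetric])
    then show ?thesis
      using b_nil is_add_hom_pow_zero[OF a] is_add_hom_pow_zero[OF b] by simp
  qed
next
  case (Suc n)
  define F where "F = (\<lambda>v. a v + b v)"
  have "is_add_hom (F ^^ n)"
    using a b by (intro is_add_hom_pow) (auto simp: is_add_hom_def F_def algebra_simps)
  moreover have "(a ^^ i) (b y) = b ((a ^^ i) y)" for y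
    by (induction i) (auto simp: ab)
  then have "F ((a ^^ i) ((b ^^ j) x)) = (a ^^ Suc i) ((b ^^ j) x) + (a ^^ i) ((b ^^ Suc j) x)"
    by (simp add: F_def)
  ultimately have "(F ^^ Suc n) ((a ^^ i) ((b ^^ j) x)) =
      (F ^^ n) ((a ^^ Suc i) ((b ^^ j) x)) + (F ^^ n) ((a ^^ i) ((b ^^ Suc j) x))"
    by (simp add: funpow_Suc_right is_add_hom_def del: funpow.simps)
  also have "\<dots> = 0"
    using Suc.IH[of "Suc i" j] Suc.IH[of i "Suc j"] Suc.prems by (simp add: F_def)
  finally show ?case
    by (simp add: F_def)
qed

lemma nilpotent_add_commuting:
  fixes a b :: "'v::ab_group_add \<Rightarrow> 'v"
  assumes "is_add_hom a" "is_add_hom b" "\<And>x. a (b x) = b (a x)"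
    and "a ^^ p = (\<lambda>v. 0)" "b ^^ q = (\<lambda>v. 0)"
  shows "(\<lambda>v. a v + b v) ^^ (p + q) = (\<lambda>v. 0)"
  using funpow_add_commuting_vanishes[OF assms, of "p + q" 0 0] by auto

lemma nilpotent_sum_commuting:
  fixes f :: "'t \<Rightarrow> 'v::ab_group_add \<Rightarrow> 'v"
  assumes "finite T"
    and "\<And>t. t \<in> T \<Longrightarrow> is_add_hom (f t)"
    and "\<And>t. t \<in> T \<Longrightarrow> \<exists>m. f t ^^ m = (\<lambda>v. 0)"
    and "\<And>s t x. s \<in> T \<Longrightarrow> t \<in> T \<Longrightarrow> f s (f t x) = f t (f s x)"
  shows "\<exists>m. (\<lambda>v. \<Sum>t\<in>T. f t v) ^^ m = (\<lambda>v. 0)"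
  using assms
proof (induction T rule: finite_induct)
  case empty
  show ?case
    by (rule exI[of _ 1]) simp
next
  case (insert t T)
  define S where "S = (\<lambda>v. \<Sum>s\<in>T. f s v)"
  have S: "is_add_hom S"
    using insert.prems by (auto simp: is_add_hom_def S_def sum.distrib)
  obtain q where q: "S ^^ q = (\<lambda>v. 0)"
    using insert by (auto simp: S_def)
  obtain p where p: "f t ^^ p = (\<lambda>v. 0)"
    using insert.prems by blast
  have ft: "is_add_hom (f t)"
    using insert.prems by blast
  have "f t (S x) = S (f t x)" for x
    unfolding S_def using insert.prems by (simp add: is_add_hom_sum[OF ft])
  then have "(\<lambda>v. f t v + S v) ^^ (p + q) = (\<lambda>v. 0)"
    by (rule nilpotent_add_commuting[OF ft S _ p q])
  moreover have "(\<lambda>v. \<Sum>s\<in>insert t T. f s v) = (\<lambda>v. f t v + S v)"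
    using insert.hyps by (simp add: S_def)
  ultimately show ?case
    by metis
qed


section \<open>Bar chains and homogeneous chains of an abelian group\<close>

locale abelian_rep_subgroup = comm_group G for G (structure) +
  fixes \<rho> :: "'g \<Rightarrow> 'v::ab_group_add \<Rightarrow> 'v" and H :: "'g set"
  assumes rho_add: "g \<in> carrier G \<Longrightarrow> \<rho> g (a + b) = \<rho> g a + \<rho> g b"
    and rho_mult: "g \<in> carrier G \<Longrightarrow> h \<in> carrier G \<Longrightarrow> \<rho> (g \<otimes> h) = \<rho> g \<circ> \<rho> h"
    and rho_one: "\<rho> \<one> = id"
    and sub: "subgroup H G"
    and fin: "finite (rcosets H)"
begin

lemma rho_mult_apply: "g \<in> carrier G \<Longrightarrow> h \<in> carrier G \<Longrightarrow> \<rho> (g \<otimes> h) v = \<rho> g (\<rho> h v)"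
  using rho_mult by simp

lemma rho_zero: "g \<in> carrier G \<Longrightarrow> \<rho> g 0 = 0"
  using rho_add[of g 0 0] by simp

lemma rho_uminus: "g \<in> carrier G \<Longrightarrow> \<rho> g (- a) = - \<rho> g a"
  using rho_add[of g a "- a"] rho_zero[of g] by (simp add: eq_neg_iff_add_eq_0 add.commute)

lemma rho_diff: "g \<in> carrier G \<Longrightarrow> \<rho> g (a - b) = \<rho> g a - \<rho> g b"
  using rho_add[of g a "- b"] rho_uminus[of g b] by simp

lemma rho_alt_sign: "g \<in> carrier G \<Longrightarrow> \<rho> g (alt_sign i a) = alt_sign i (\<rho> g a)"
  by (simp add: alt_sign_def rho_uminus)

lemma rho_sum: "g \<in> carrier G \<Longrightarrow> \<rho> g (\<Sum>i\<in>I. f i) = (\<Sum>i\<in>I. \<rho> g (f i))"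
  by (induction I rule: infinite_finite_induct) (auto simp: rho_zero rho_add)

lemma rho_commute: "g \<in> carrier G \<Longrightarrow> h \<in> carrier G \<Longrightarrow> \<rho> g (\<rho> h v) = \<rho> h (\<rho> g v)"
  by (metis rho_mult_apply m_comm)

lemma H_carrier: "h \<in> H \<Longrightarrow> h \<in> carrier G"
  by (rule subgroup.mem_carrier[OF sub])

lemma H_sub: "H \<subseteq> carrier G"
  using H_carrier by blast

lemma H_one: "\<one> \<in> H"
  by (rule subgroup.one_closed[OF sub])

lemma H_inv: "h \<in> H \<Longrightarrow> inv h \<in> H"
  by (rule subgroup.m_inv_closed[OF sub])

lemma H_mult: "h \<in> H \<Longrightarrow> k \<in> H \<Longrightarrow> h \<otimes> k \<in> H"
  by (rule subgroup.m_closed[OF sub])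

lemma m_inv_cancel_left [simp]: "x \<in> carrier G \<Longrightarrow> y \<in> carrier G \<Longrightarrow> x \<otimes> (inv x \<otimes> y) = y"
  by (simp add: m_assoc[symmetric])

lemma inv_m_cancel_left [simp]: "x \<in> carrier G \<Longrightarrow> y \<in> carrier G \<Longrightarrow> inv x \<otimes> (x \<otimes> y) = y"
  by (simp add: m_assoc[symmetric])

lemma m_inv_cancel_right [simp]: "x \<in> carrier G \<Longrightarrow> y \<in> carrier G \<Longrightarrow> x \<otimes> y \<otimes> inv y = x"
  by (simp add: m_assoc)

lemma inv_m_cancel_right [simp]: "x \<in> carrier G \<Longrightarrow> y \<in> carrier G \<Longrightarrow> x \<otimes> inv y \<otimes> y = x"
  by (simp add: m_assoc)

abbreviation G_list :: "'g list \<Rightarrow> bool" where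
  "G_list x \<equiv> set x \<subseteq> carrier G"

fun bar_coords :: "'g list \<Rightarrow> 'g list" where
  "bar_coords (a # b # r) = (inv a \<otimes> b) # bar_coords (b # r)"
| "bar_coords _ = []"

fun partial_prods :: "'g \<Rightarrow> 'g list \<Rightarrow> 'g list" where
  "partial_prods a [] = [a]"
| "partial_prods a (y # ys) = a # partial_prods (a \<otimes> y) ys"

lemma length_bar_coords [simp]: "length (bar_coords x) = length x - 1"
  by (induction x rule: bar_coords.induct) auto

lemma bar_coords_G_list: "G_list x \<Longrightarrow> G_list (bar_coords x)"
  by (induction x rule: bar_coords.induct) auto

lemma bar_coords_in_H: "(\<forall>a\<in>set x. \<forall>b\<in>set x. inv a \<otimes> b \<in> H) \<Longrightarrow> set (bar_coords x) \<subseteq> H"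
  by (induction x rule: bar_coords.induct) auto

lemma bar_coords_butlast: "bar_coords (butlast x) = butlast (bar_coords x)"
proof (induction x rule: bar_coords.induct)
  case (1 a b r)
  then show ?case
    by (cases r) auto
qed auto

lemma bar_coords_delete:
  "G_list x \<Longrightarrow> 0 < i \<Longrightarrow> Suc i < length x \<Longrightarrow>
    bar_coords (take i x @ drop (Suc i) x) =
      take (i - 1) (bar_coords x) @ [bar_coords x ! (i - 1) \<otimes> bar_coords x ! i] @
        drop (i + 1) (bar_coords x)"
proof (induction x arbitrary: i rule: bar_coords.induct)
  case (1 a b r)
  show ?case
  proof (cases "i = 1")
    case True
    then obtain c r' where "r = c # r'"
      using 1 by (cases r) auto
    then show ?thesis
      using True 1(2) by (simp add: m_assoc[symmetric])
  next
    case False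
    then obtain j where j: "i = Suc j" "0 < j"
      using 1 by (cases i) auto
    let ?y = "take j (b # r) @ drop (Suc j) (b # r)"
    have "take i (a # b # r) @ drop (Suc i) (a # b # r) = a # ?y"
      using j by simp
    moreover obtain w where "?y = b # w"
      using j by (cases j) auto
    moreover have "bar_coords ?y =
        take (j - 1) (bar_coords (b # r)) @ [bar_coords (b # r) ! (j - 1) \<otimes> bar_coords (b # r) !
            j] @
          drop (j + 1) (bar_coords (b # r))"
      using 1 j by auto
    ultimately show ?thesis
      using j by (cases j) auto
  qed
qed auto

lemma bar_coords_map_left: "g \<in> carrier G \<Longrightarrow> G_list x \<Longrightarrow> bar_coords (map ((\<otimes>) g) x) = bar_coords x"
  by (induction x rule: bar_coords.induct) (auto simp: inv_mult m_ac)

lemma bar_coords_map_right: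
  "c \<in> carrier G \<Longrightarrow> G_list x \<Longrightarrow> bar_coords (map (\<lambda>y. y \<otimes> c) x) = bar_coords x"
  by (induction x rule: bar_coords.induct) (auto simp: inv_mult m_ac)

lemma length_partial_prods [simp]: "length (partial_prods a q) = Suc (length q)"
  by (induction q arbitrary: a) auto

lemma hd_partial_prods [simp]: "hd (partial_prods a q) = a"
  by (cases q) auto

lemma partial_prods_ne [simp]: "partial_prods a q \<noteq> []"
  by (cases q) auto

lemma partial_prods_G_list: "a \<in> carrier G \<Longrightarrow> G_list q \<Longrightarrow> G_list (partial_prods a q)"
  by (induction q arbitrary: a) auto

lemma partial_prods_H: "a \<in> H \<Longrightarrow> set q \<subseteq> H \<Longrightarrow> set (partial_prods a q) \<subseteq> H"
  by (induction q arbitrary: a) (auto intro: H_mult)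

lemma bar_coords_partial_prods: "a \<in> carrier G \<Longrightarrow> G_list q \<Longrightarrow> bar_coords (partial_prods a q) = q"
proof (induction q arbitrary: a)
  case (Cons y ys)
  then show ?case
    by (cases ys) auto
qed auto

lemma partial_prods_bar_coords:
  "a \<in> carrier G \<Longrightarrow> G_list (b # r) \<Longrightarrow>
    partial_prods a (bar_coords (b # r)) = map (\<lambda>y. a \<otimes> (inv b \<otimes> y)) (b # r)"
proof (induction r arbitrary: a b)
  case (Cons c r)
  let ?a' = "a \<otimes> (inv b \<otimes> c)"
  have "partial_prods ?a' (bar_coords (c # r)) = map (\<lambda>y. ?a' \<otimes> (inv c \<otimes> y)) (c # r)"
    using Cons by auto
  moreover have "?a' \<otimes> (inv c \<otimes> y) = a \<otimes> (inv b \<otimes> y)" if "y \<in> carrier G" for y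
    using Cons.prems that by (simp add: m_assoc)
  ultimately show ?case
    using Cons.prems by (auto simp: subset_iff)
qed simp

text \<open>
  \<open>bar_bd_lin\<close> extends the boundary \<open>bar_bd\<close> additively to all finitely supported chains
  (\<open>bar_bd_eq_bar_bd_lin\<close>), and \<open>to_bar\<close> maps a homogeneous chain
  \<open>[x\<^sub>0, \<dots>, x\<^sub>k] \<otimes> v\<close> to its class \<open>[x\<^sub>0\<inverse>x\<^sub>1 | \<dots> | x\<^sub>k\<^sub>-\<^sub>1\<inverse>x\<^sub>k] \<otimes> x\<^sub>0\<inverse>v\<close> in the bar complex.
\<close>

definition bar_face_coeff :: "'g list \<Rightarrow> nat \<Rightarrow> 'v \<Rightarrow> 'v" where
  "bar_face_coeff \<sigma> i v = alt_sign i (if i = 0 then \<rho> (inv (\<sigma> ! 0)) v else v)"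

definition bar_bd_gen :: "'g list \<Rightarrow> 'v \<Rightarrow> 'g list \<Rightarrow> 'v" where
  "bar_bd_gen \<sigma> v = (if \<sigma> \<noteq> [] \<and> G_list \<sigma>
     then (\<Sum>i\<in>{0..length \<sigma>}. single (bar_face G i \<sigma>) (bar_face_coeff \<sigma> i v)) else 0)"

definition bar_bd_lin :: "('g list \<Rightarrow> 'v) \<Rightarrow> 'g list \<Rightarrow> 'v" where
  "bar_bd_lin = linext bar_bd_gen"

definition to_bar_gen :: "'g list \<Rightarrow> 'v \<Rightarrow> 'g list \<Rightarrow> 'v" where
  "to_bar_gen x v = (if x \<noteq> [] \<and> G_list x then single (bar_coords x) (\<rho> (inv (hd x)) v) else 0)"

definition to_bar :: "('g list \<Rightarrow> 'v) \<Rightarrow> 'g list \<Rightarrow> 'v" where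
  "to_bar = linext to_bar_gen"

lemma bar_face_coeff_add:
  "\<sigma> \<noteq> [] \<Longrightarrow> G_list \<sigma> \<Longrightarrow> bar_face_coeff \<sigma> i (a + b) = bar_face_coeff \<sigma> i a + bar_face_coeff \<sigma> i b"
  by (cases \<sigma>) (auto simp: bar_face_coeff_def alt_sign_add rho_add)

lemma additive_gen_bar_bd_gen: "additive_gen bar_bd_gen"
  by (auto simp: additive_gen_def bar_bd_gen_def bar_face_coeff_add single_add sum.distrib)

lemma additive_gen_to_bar_gen: "additive_gen to_bar_gen"
proof -
  have "to_bar_gen x (a + b) = to_bar_gen x a + to_bar_gen x b" for x a b
  proof (cases "x \<noteq> [] \<and> G_list x")
    case True
    then have "hd x \<in> carrier G"
      by (cases x) auto
    with True show ?thesis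
      by (simp add: to_bar_gen_def rho_add single_add)
  qed (auto simp: to_bar_gen_def)
  then show ?thesis
    by (simp add: additive_gen_def to_bar_gen_def)
qed

lemma chain_additive_bar_bd_lin: "chain_additive bar_bd_lin"
  by (simp add: bar_bd_lin_def chain_additive_linext additive_gen_bar_bd_gen)

lemma chain_additive_to_bar: "chain_additive to_bar"
  by (simp add: to_bar_def chain_additive_linext additive_gen_to_bar_gen)

lemma bar_bd_lin_single: "bar_bd_lin (single x v) = bar_bd_gen x v"
  by (simp add: bar_bd_lin_def linext_single additive_gen_bar_bd_gen)

lemma to_bar_single: "to_bar (single x v) = to_bar_gen x v"
  by (simp add: to_bar_def linext_single additive_gen_to_bar_gen)

lemma finsupp_bar_bd_lin [simp]: "finsupp c \<Longrightarrow> finsupp (bar_bd_lin c)"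
  by (rule chain_additive_finsupp[OF chain_additive_bar_bd_lin])

lemma finsupp_to_bar [simp]: "finsupp c \<Longrightarrow> finsupp (to_bar c)"
  by (rule chain_additive_finsupp[OF chain_additive_to_bar])

lemma bar_bd_eq_bar_bd_lin:
  assumes c: "hchain S k c" and S: "S \<subseteq> carrier G"
  shows "bar_bd G \<rho> k c = bar_bd_lin c"
proof
  fix \<tau>
  have supp: "length \<sigma> = k \<and> G_list \<sigma>" if "c \<sigma> \<noteq> 0" for \<sigma>
    using c S that by (auto simp: hchain_def)
  have "bar_bd_lin c \<tau> = (\<Sum>\<sigma>\<in>{\<sigma>. c \<sigma> \<noteq> 0}. bar_bd_gen \<sigma> (c \<sigma>) \<tau>)"
    by (simp add: bar_bd_lin_def linext_def supp_def sum_apply)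
  also have "\<dots> = bar_bd G \<rho> k c \<tau>"
  proof (cases "k = 0")
    case True
    then show ?thesis
      using supp by (auto simp: bar_bd_def bar_bd_gen_def intro!: sum.neutral)
  next
    case False
    then have "\<sigma> \<noteq> []" if "c \<sigma> \<noteq> 0" for \<sigma>
      using supp[OF that] by auto
    with False show ?thesis
      unfolding bar_bd_def using supp
      by (auto simp: bar_bd_gen_def bar_face_coeff_def alt_sign_def sum_apply single_def Let_def
          intro!: sum.cong)
  qed
  finally show "bar_bd G \<rho> k c \<tau> = bar_bd_lin c \<tau>"
    by simp
qed

lemma bar_coords_delete_bar_face:
  assumes "G_list x" "0 < i" "i < length x"
  shows "bar_coords (take i x @ drop (Suc i) x) = bar_face G i (bar_coords x)"
proof (cases "Suc i < length x")
  case True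
  then show ?thesis
    using bar_coords_delete[OF assms(1,2) True] assms(2) by (simp add: bar_face_def less_diff_conv)
next
  case False
  then have "i = length x - 1"
    using assms(3) by simp
  then have "take i x @ drop (Suc i) x = butlast x" "\<not> i < length (bar_coords x)"
    by (simp_all add: butlast_conv_take)
  then show ?thesis
    using assms(2) by (simp add: bar_face_def bar_coords_butlast)
qed

lemma to_bar_gen_delete:
  assumes x: "G_list x" "Suc 0 < length x" and i: "i < length x"
  shows "to_bar_gen (take i x @ drop (Suc i) x) (alt_sign i v)
    = single (bar_face G i (bar_coords x)) (bar_face_coeff (bar_coords x) i (\<rho> (inv (hd x)) v))"
proof -
  obtain a b r where xabr: "x = a # b # r"
    using x(2) by (cases x rule: remdups_adj.cases) auto
  have a: "a \<in> carrier G" and b: "b \<in> carrier G"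
    using x(1) xabr by auto
  show ?thesis
  proof (cases "i = 0")
    case True
    have "\<rho> (inv (inv a \<otimes> b)) (\<rho> (inv a) v) = \<rho> (inv b) v"
      using a b by (simp add: rho_mult_apply[symmetric] inv_mult_group m_assoc)
    then show ?thesis
      using True x(1) xabr by (simp add: to_bar_gen_def bar_face_def bar_face_coeff_def)
  next
    case False
    then have "hd (take i x @ drop (Suc i) x) = hd x" "take i x @ drop (Suc i) x \<noteq> []"
      using xabr by (cases i; simp)+
    moreover have "G_list (take i x @ drop (Suc i) x)"
      using x(1) set_take_subset[of i x] set_drop_subset[of "Suc i" x] by auto
    moreover have "hd x \<in> carrier G"
      using a xabr by simp
    ultimately show ?thesis
      using False x(1) i
      by (simp add: to_bar_gen_def bar_face_coeff_def bar_coords_delete_bar_face rho_alt_sign)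
  qed
qed

lemma bar_bd_lin_to_bar_gen:
  assumes "G_list x"
  shows "bar_bd_lin (to_bar_gen x v) = to_bar (hom_bd_gen x v)"
proof -
  have rhs: "to_bar (hom_bd_gen x v)
      = (\<Sum>i<length x. to_bar_gen (take i x @ drop (Suc i) x) (alt_sign i v))"
    unfolding hom_bd_gen_def
      by (simp add: chain_additive_sum[OF chain_additive_to_bar] to_bar_single)
  consider "x = []" | a where "x = [a]" | "Suc 0 < length x"
    by (cases x rule: remdups_adj.cases) auto
  then show ?thesis
  proof cases
    case 1
    then show ?thesis
      by (simp add: rhs to_bar_gen_def chain_additive_zero[OF chain_additive_bar_bd_lin]
          chain_additive_zero[OF chain_additive_to_bar])
  next
    case 2
    then show ?thesis
      using assms
        by (simp add: hom_bd_gen_def to_bar_single to_bar_gen_def bar_bd_lin_single bar_bd_gen_def)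
  next
    case 3
    then have "{0..length (bar_coords x)} = {..<length x}" "bar_coords x \<noteq> []"
      by (cases x rule: remdups_adj.cases; auto)+
    moreover have "x \<noteq> []"
      using 3 by auto
    ultimately have "bar_bd_lin (to_bar_gen x v) = (\<Sum>i<length x.
        single (bar_face G i (bar_coords x)) (bar_face_coeff (bar_coords x) i (\<rho> (inv (hd x)) v)))"
      using assms by (simp add: to_bar_gen_def bar_bd_lin_single bar_bd_gen_def bar_coords_G_list)
    also have "\<dots> = to_bar (hom_bd_gen x v)"
      unfolding rhs using 3 assms by (intro sum.cong) (simp_all add: to_bar_gen_delete)
    finally show ?thesis .
  qed
qed

lemma bar_bd_lin_to_bar: "finsupp Y \<Longrightarrow> supp_in G_list Y \<Longrightarrow> bar_bd_lin (to_bar Y) = to_bar (hom_bd Y)"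
  by (rule chain_additive_eqI[OF chain_additive_comp[OF chain_additive_bar_bd_lin chain_additive_to_bar]
        chain_additive_comp[OF chain_additive_to_bar chain_additive_hom_bd]])
    (simp_all add: to_bar_single hom_bd_single bar_bd_lin_to_bar_gen supp_in_def)

definition same_coset :: "'g \<Rightarrow> 'g \<Rightarrow> bool" where
  "same_coset x y \<longleftrightarrow> inv x \<otimes> y \<in> H"

lemma same_coset_refl: "x \<in> carrier G \<Longrightarrow> same_coset x x"
  by (simp add: same_coset_def H_one)

lemma same_coset_sym: "x \<in> carrier G \<Longrightarrow> y \<in> carrier G \<Longrightarrow> same_coset x y \<Longrightarrow> same_coset y x"
  unfolding same_coset_def using H_inv[of "inv x \<otimes> y"] by (simp add: inv_mult_group)

lemma same_coset_trans:
  "x \<in> carrier G \<Longrightarrow> y \<in> carrier G \<Longrightarrow> z \<in> carrier G \<Longrightarrow> same_coset x y \<Longrightarrow> same_coset y z \<Longrightarrow>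
    same_coset x z"
  unfolding same_coset_def using H_mult[of "inv x \<otimes> y" "inv y \<otimes> z"] by (simp add: m_assoc)

lemma same_coset_mult:
  "x \<in> carrier G \<Longrightarrow> y \<in> carrier G \<Longrightarrow> a \<in> carrier G \<Longrightarrow> same_coset x y \<Longrightarrow>
    same_coset (a \<otimes> x) (a \<otimes> y)"
  unfolding same_coset_def by (simp add: inv_mult_group m_assoc)

lemma same_coset_inv: "x \<in> carrier G \<Longrightarrow> y \<in> carrier G \<Longrightarrow> same_coset x y \<Longrightarrow> same_coset (inv x) (inv y)"
  unfolding same_coset_def using H_inv[of "inv x \<otimes> y"] by (simp add: inv_mult_group m_comm)

definition coset_rep :: "'g \<Rightarrow> 'g" where
  "coset_rep y = (SOME z. z \<in> carrier G \<and> same_coset y z)"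

definition coset_reps :: "'g set" where
  "coset_reps = coset_rep ` carrier G"

lemma coset_rep_carrier_same_coset:
  "y \<in> carrier G \<Longrightarrow> coset_rep y \<in> carrier G \<and> same_coset y (coset_rep y)"
  unfolding coset_rep_def by (rule someI[of _ y]) (simp add: same_coset_refl)

lemma coset_rep_carrier [simp]: "y \<in> carrier G \<Longrightarrow> coset_rep y \<in> carrier G"
  using coset_rep_carrier_same_coset by blast

lemma coset_rep_same_coset: "y \<in> carrier G \<Longrightarrow> same_coset y (coset_rep y)"
  using coset_rep_carrier_same_coset by blast

lemma coset_rep_cong:
  assumes "x \<in> carrier G" "y \<in> carrier G" "same_coset x y"
  shows "coset_rep x = coset_rep y"
proof -
  have "z \<in> carrier G \<and> same_coset x z \<longleftrightarrow> z \<in> carrier G \<and> same_coset y z" for z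
  proof
    assume "z \<in> carrier G \<and> same_coset x z"
    then show "z \<in> carrier G \<and> same_coset y z"
      using same_coset_trans[of y x z] same_coset_sym[OF assms] assms by blast
  next
    assume "z \<in> carrier G \<and> same_coset y z"
    then show "z \<in> carrier G \<and> same_coset x z"
      using same_coset_trans[of x y z] assms by blast
  qed
  then show ?thesis
    by (simp add: coset_rep_def)
qed

lemma coset_rep_mult_coset_rep:
  assumes "a \<in> carrier G" "u \<in> carrier G"
  shows "coset_rep (a \<otimes> coset_rep u) = coset_rep (a \<otimes> u)"
proof -
  have "same_coset (coset_rep u) u"
    using same_coset_sym[OF _ coset_rep_carrier coset_rep_same_coset] assms(2) by blast
  then have "same_coset (a \<otimes> coset_rep u) (a \<otimes> u)"
    using same_coset_mult[OF coset_rep_carrier[OF assms(2)] assms(2) assms(1)] by blast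
  then show ?thesis
    using coset_rep_cong[of "a \<otimes> coset_rep u" "a \<otimes> u"] assms by simp
qed

lemma coset_reps_carrier: "t \<in> coset_reps \<Longrightarrow> t \<in> carrier G"
  by (auto simp: coset_reps_def)

lemma coset_rep_idem:
  assumes "t \<in> coset_reps"
  shows "coset_rep t = t"
proof -
  obtain u where "u \<in> carrier G" "t = coset_rep u"
    using assms by (auto simp: coset_reps_def)
  then show ?thesis
    using coset_rep_mult_coset_rep[of \<one> u] by simp
qed

lemma finite_coset_reps: "finite coset_reps"
proof -
  have "inj_on (\<lambda>t. H #> t) coset_reps"
  proof (rule inj_onI)
    fix t1 t2
    assume t: "t1 \<in> coset_reps" "t2 \<in> coset_reps" "H #> t1 = H #> t2"
    then have c: "t1 \<in> carrier G" "t2 \<in> carrier G"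
      using coset_reps_carrier by auto
    then have "t2 \<in> H #> t1"
      using rcos_self[OF c(2) sub] t(3) by simp
    then have "t2 \<otimes> inv t1 \<in> H"
      using subgroup.rcos_module_imp[OF sub is_group c(1)] by blast
    then have "same_coset t1 t2"
      using c by (simp add: same_coset_def m_comm)
    then show "t1 = t2"
      using coset_rep_cong[OF c] coset_rep_idem t by metis
  qed
  moreover have "(\<lambda>t. H #> t) ` coset_reps \<subseteq> rcosets H"
    using coset_reps_carrier rcosetsI[OF H_sub] by auto
  ultimately show ?thesis
    using fin finite_subset finite_imageD by metis
qed

lemma card_coset_reps_pos: "card coset_reps > 0"
  using finite_coset_reps by (auto simp: card_gt_0_iff coset_reps_def)

lemma coset_reps_reindex:
  assumes g: "g \<in> carrier G"
  shows "(\<Sum>t\<in>coset_reps. f (coset_rep (inv g \<otimes> t))) = (\<Sum>t\<in>coset_reps. f t :: 'z::comm_monoid_add)"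
proof (rule sum.reindex_bij_witness[of _ "\<lambda>t. coset_rep (g \<otimes> t)" "\<lambda>t. coset_rep (inv g \<otimes> t)"])
  fix t
  assume t: "t \<in> coset_reps"
  then have tc: "t \<in> carrier G"
    by (rule coset_reps_carrier)
  show "coset_rep (inv g \<otimes> coset_rep (g \<otimes> t)) = t"
    using g tc coset_rep_mult_coset_rep[of "inv g" "g \<otimes> t"] coset_rep_idem[OF t] by simp
  show "coset_rep (g \<otimes> coset_rep (inv g \<otimes> t)) = t"
    using g tc coset_rep_mult_coset_rep[of g "inv g \<otimes> t"] coset_rep_idem[OF t] by simp
  show "coset_rep (g \<otimes> t) \<in> coset_reps" "coset_rep (inv g \<otimes> t) \<in> coset_reps"
    using g tc by (simp_all add: coset_reps_def)
qed simp

definition into_coset :: "'g \<Rightarrow> 'g \<Rightarrow> 'g" where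
  "into_coset t y = y \<otimes> inv (coset_rep (inv t \<otimes> y))"

lemma into_coset_carrier [simp]: "t \<in> carrier G \<Longrightarrow> y \<in> carrier G \<Longrightarrow> into_coset t y \<in> carrier G"
  by (simp add: into_coset_def)

lemma same_coset_into_coset:
  assumes "t \<in> carrier G" "y \<in> carrier G"
  shows "same_coset t (into_coset t y)"
proof -
  define u where "u = inv t \<otimes> y"
  have u: "u \<in> carrier G"
    using assms by (simp add: u_def)
  have "inv (inv u \<otimes> coset_rep u) \<in> H"
    using coset_rep_same_coset[OF u] H_inv by (simp add: same_coset_def)
  moreover have "inv (inv u \<otimes> coset_rep u) = inv t \<otimes> into_coset t y"
    using assms u by (simp add: into_coset_def u_def inv_mult_group m_assoc m_comm)
  ultimately show ?thesis
    by (simp add: same_coset_def)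
qed

lemma into_coset_quotient_in_H:
  assumes "t \<in> carrier G" "a \<in> carrier G" "b \<in> carrier G"
  shows "inv (into_coset t a) \<otimes> into_coset t b \<in> H"
proof -
  have "same_coset (into_coset t a) t"
    using same_coset_sym[OF assms(1) into_coset_carrier[OF assms(1,2)]
        same_coset_into_coset[OF assms(1,2)]] .
  then have "same_coset (into_coset t a) (into_coset t b)"
    using same_coset_trans[OF into_coset_carrier[OF assms(1,2)] assms(1)
        into_coset_carrier[OF assms(1,3)]]
      same_coset_into_coset[OF assms(1,3)] by blast
  then show ?thesis
    by (simp add: same_coset_def)
qed

lemma into_coset_on_H:
  assumes "t \<in> carrier G" "y \<in> H"
  shows "into_coset t y = y \<otimes> inv (coset_rep (inv t))"
proof -
  have y: "y \<in> carrier G"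
    using assms H_carrier by auto
  then have "same_coset (inv t) (inv t \<otimes> y)"
    using assms by (simp add: same_coset_def)
  then have "coset_rep (inv t \<otimes> y) = coset_rep (inv t)"
    using coset_rep_cong assms y by (metis inv_closed m_closed)
  then show ?thesis
    by (simp add: into_coset_def)
qed

lemma into_coset_shift:
  assumes g: "g \<in> carrier G" and y: "y \<in> carrier G" and t: "t \<in> carrier G"
  shows "into_coset t (g \<otimes> y) = g \<otimes> into_coset (coset_rep (inv g \<otimes> t)) y"
proof -
  define t' where "t' = coset_rep (inv g \<otimes> t)"
  have t': "t' \<in> carrier G"
    using g t by (simp add: t'_def)
  have "same_coset (inv g \<otimes> t) t'"
    using coset_rep_same_coset g t by (simp add: t'_def)
  then have "same_coset (y \<otimes> inv (inv g \<otimes> t)) (y \<otimes> inv t')"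
    using same_coset_inv same_coset_mult g t t' y by simp
  moreover have "y \<otimes> inv (inv g \<otimes> t) = inv t \<otimes> (g \<otimes> y)" "y \<otimes> inv t' = inv t' \<otimes> y"
    using g t y t' by (simp_all add: inv_mult m_ac)
  ultimately have "coset_rep (inv t \<otimes> (g \<otimes> y)) = coset_rep (inv t' \<otimes> y)"
    using coset_rep_cong g t y t' by (metis inv_closed m_closed)
  then show ?thesis
    using g y t t' by (simp add: into_coset_def t'_def m_assoc)
qed

section \<open>The transfer\<close>

definition act_gen :: "'g \<Rightarrow> 'g list \<Rightarrow> 'v \<Rightarrow> 'g list \<Rightarrow> 'v" where
  "act_gen g x v = (if g \<in> carrier G then single (map ((\<otimes>) g) x) (\<rho> g v) else 0)"

definition act_chain :: "'g \<Rightarrow> ('g list \<Rightarrow> 'v) \<Rightarrow> 'g list \<Rightarrow> 'v" where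
  "act_chain g = linext (act_gen g)"

definition to_hom :: "('g list \<Rightarrow> 'v) \<Rightarrow> 'g list \<Rightarrow> 'v" where
  "to_hom = linext (\<lambda>q v. single (partial_prods \<one> q) v)"

definition transfer_hom :: "('g list \<Rightarrow> 'v) \<Rightarrow> 'g list \<Rightarrow> 'v" where
  "transfer_hom X = (\<Sum>t\<in>coset_reps. map_chain (into_coset t) X)"

definition transfer_prism :: "('g list \<Rightarrow> 'v) \<Rightarrow> 'g list \<Rightarrow> 'v" where
  "transfer_prism X = (\<Sum>t\<in>coset_reps. prism (into_coset t) X)"

definition transfer :: "('g list \<Rightarrow> 'v) \<Rightarrow> 'g list \<Rightarrow> 'v" where
  "transfer X = to_bar (transfer_hom (to_hom X))"

lemma additive_gen_act_gen: "additive_gen (act_gen g)"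
  by (auto simp: additive_gen_def act_gen_def rho_add single_add)

lemma chain_additive_act_chain: "chain_additive (act_chain g)"
  by (simp add: act_chain_def chain_additive_linext additive_gen_act_gen)

lemma chain_additive_to_hom: "chain_additive to_hom"
  by (simp add: to_hom_def chain_additive_linext additive_gen_single)

lemma chain_additive_transfer_hom: "chain_additive transfer_hom"
  unfolding transfer_hom_def by (rule chain_additive_sum_maps) (rule chain_additive_map_chain)

lemma chain_additive_transfer_prism: "chain_additive transfer_prism"
  unfolding transfer_prism_def by (rule chain_additive_sum_maps) (rule chain_additive_prism)

lemma chain_additive_transfer: "chain_additive transfer"
  unfolding transfer_def
  by (rule chain_additive_comp[OF chain_additive_to_bar
        chain_additive_comp[OF chain_additive_transfer_hom chain_additive_to_hom]])

lemma act_chain_single: "g \<in> carrier G \<Longrightarrow> act_chain g (single x v) = single (map ((\<otimes>) g) x) (\<rho> g v)"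
  by (simp add: act_chain_def linext_single additive_gen_act_gen act_gen_def)

lemma to_hom_single: "to_hom (single q v) = single (partial_prods \<one> q) v"
  by (simp add: to_hom_def linext_single additive_gen_single)

lemma transfer_hom_single:
  "transfer_hom (single x v) = (\<Sum>t\<in>coset_reps. single (map (into_coset t) x) v)"
  by (simp add: transfer_hom_def map_chain_single)

lemma finsupp_act_chain [simp]: "finsupp c \<Longrightarrow> finsupp (act_chain g c)"
  by (rule chain_additive_finsupp[OF chain_additive_act_chain])

lemma finsupp_transfer_hom [simp]: "finsupp c \<Longrightarrow> finsupp (transfer_hom c)"
  by (rule chain_additive_finsupp[OF chain_additive_transfer_hom])

lemma finsupp_transfer_prism [simp]: "finsupp c \<Longrightarrow> finsupp (transfer_prism c)"
  by (rule chain_additive_finsupp[OF chain_additive_transfer_prism])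

lemma finsupp_to_hom [simp]: "finsupp c \<Longrightarrow> finsupp (to_hom c)"
  by (rule chain_additive_finsupp[OF chain_additive_to_hom])

lemma finsupp_transfer [simp]: "finsupp c \<Longrightarrow> finsupp (transfer c)"
  by (rule chain_additive_finsupp[OF chain_additive_transfer])

lemma supp_in_G_list_map_chain:
  assumes a: "finsupp X" "supp_in G_list X" "t \<in> carrier G"
  shows "supp_in G_list (map_chain (into_coset t) X)"
proof (rule supp_in_chain_additive[OF chain_additive_map_chain a(1)])
  fix \<sigma> assume "X \<sigma> \<noteq> 0"
  then have "G_list \<sigma>" using a(2) by (simp add: supp_in_def)
  then show "supp_in G_list (map_chain (into_coset t) (single \<sigma> (X \<sigma>)))" using a
    by (auto simp: map_chain_single subset_iff intro!: supp_in_single)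
qed

lemma supp_in_G_list_transfer_hom: "finsupp X \<Longrightarrow> supp_in G_list X \<Longrightarrow> supp_in G_list (transfer_hom X)"
  unfolding transfer_hom_def
  by (rule supp_in_sum) (simp add: supp_in_G_list_map_chain coset_reps_carrier)

lemma supp_in_transfer_prism:
  assumes a: "finsupp X" "supp_in P X"
    "\<And>x i t. P x \<Longrightarrow> t \<in> coset_reps \<Longrightarrow> i < length x \<Longrightarrow>
      Q (take (Suc i) (map (into_coset t) x) @ drop i x)"
  shows "supp_in Q (transfer_prism X)"
  unfolding transfer_prism_def
  by (rule supp_in_sum) (rule supp_in_prism[where P=P, OF a(1,2)], use a(3) in auto)

lemma supp_in_to_hom:
  assumes a: "finsupp X" "supp_in P X" "\<And>q. P q \<Longrightarrow> Q (partial_prods \<one> q)"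
  shows "supp_in Q (to_hom X)"
proof (rule supp_in_chain_additive[OF chain_additive_to_hom a(1)])
  fix \<sigma> assume "X \<sigma> \<noteq> 0"
  then have "P \<sigma>" using a(2) by (simp add: supp_in_def)
  then show "supp_in Q (to_hom (single \<sigma> (X \<sigma>)))" using a(3)
    by (auto simp: to_hom_single intro!: supp_in_single)
qed

lemma supp_in_to_bar:
  assumes a: "finsupp X" "supp_in P X" "\<And>x. P x \<Longrightarrow> x \<noteq> [] \<Longrightarrow> G_list x \<Longrightarrow> Q (bar_coords x)"
  shows "supp_in Q (to_bar X)"
proof (rule supp_in_chain_additive[OF chain_additive_to_bar a(1)])
  fix \<sigma> assume "X \<sigma> \<noteq> 0"
  then have "P \<sigma>" using a(2) by (simp add: supp_in_def)
  then show "supp_in Q (to_bar (single \<sigma> (X \<sigma>)))" using a(3)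
    by (auto simp: to_bar_single to_bar_gen_def intro!: supp_in_single)
qed

lemma to_bar_act_chain:
  "finsupp X \<Longrightarrow> supp_in G_list X \<Longrightarrow> g \<in> carrier G \<Longrightarrow> to_bar (act_chain g X) = to_bar X"
proof (rule
    chain_additive_eqI[OF chain_additive_comp[OF chain_additive_to_bar chain_additive_act_chain]
      chain_additive_to_bar])
  fix \<sigma> assume a: "supp_in G_list X" "g \<in> carrier G" "X \<sigma> \<noteq> 0"
  then have G: "G_list \<sigma>" by (auto simp: supp_in_def)
  show "to_bar (act_chain g (single \<sigma> (X \<sigma>))) = to_bar (single \<sigma> (X \<sigma>))"
  proof (cases \<sigma>)
    case (Cons b rest)
    have "inv (g \<otimes> b) \<otimes> g = inv b" using a G Cons by (simp add: inv_mult_group m_assoc)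
    then have "\<rho> (inv (g \<otimes> b)) (\<rho> g (X \<sigma>)) = \<rho> (inv b) (X \<sigma>)"
      using a G Cons by (simp add: rho_mult_apply[symmetric])
    then show ?thesis using a G Cons
      by (simp add: act_chain_single to_bar_single to_bar_gen_def subset_iff
          bar_coords_map_left[of g "b # rest", simplified])
  qed (simp add: act_chain_single to_bar_single to_bar_gen_def a)
qed

lemma map_chain_act_chain:
  assumes "finsupp X" "supp_in G_list X" "g \<in> carrier G" "t \<in> carrier G"
  shows "map_chain (into_coset t) (act_chain g X)
    = act_chain g (map_chain (into_coset (coset_rep (inv g \<otimes> t))) X)"
proof (rule
    chain_additive_eqI[OF chain_additive_comp[OF chain_additive_map_chain chain_additive_act_chain]
      chain_additive_comp[OF chain_additive_act_chain chain_additive_map_chain] assms(1)])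
  fix \<sigma> assume "X \<sigma> \<noteq> 0"
  then have G: "G_list \<sigma>" using assms by (auto simp: supp_in_def)
  have m: "map (into_coset t) (map ((\<otimes>) g) \<sigma>)
    = map ((\<otimes>) g) (map (into_coset (coset_rep (inv g \<otimes> t))) \<sigma>)"
    using G assms by (auto simp: into_coset_shift)
  show "map_chain (into_coset t) (act_chain g (single \<sigma> (X \<sigma>)))
    = act_chain g (map_chain (into_coset (coset_rep (inv g \<otimes> t))) (single \<sigma> (X \<sigma>)))"
    by (simp only: act_chain_single[OF assms(3)] map_chain_single m)
qed

lemma prism_act_chain:
  assumes "finsupp X" "supp_in G_list X" "g \<in> carrier G" "t \<in> carrier G"
  shows "prism (into_coset t) (act_chain g X)
    = act_chain g (prism (into_coset (coset_rep (inv g \<otimes> t))) X)"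
proof (rule
    chain_additive_eqI[OF chain_additive_comp[OF chain_additive_prism chain_additive_act_chain]
      chain_additive_comp[OF chain_additive_act_chain chain_additive_prism] assms(1)])
  fix \<sigma> assume "X \<sigma> \<noteq> 0"
  then have G: "G_list \<sigma>" using assms by (auto simp: supp_in_def)
  have m: "map (into_coset t) (map ((\<otimes>) g) \<sigma>)
    = map ((\<otimes>) g) (map (into_coset (coset_rep (inv g \<otimes> t))) \<sigma>)"
    using G assms by (auto simp: into_coset_shift)
  have l: "take (Suc i) (map (into_coset t) (map ((\<otimes>) g) \<sigma>)) @ drop i (map ((\<otimes>) g) \<sigma>) =
      map ((\<otimes>) g) (take (Suc i) (map (into_coset (coset_rep (inv g \<otimes> t))) \<sigma>) @ drop i \<sigma>)" for i
    by (simp only: m map_append take_map drop_map)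
  have "prism_gen (into_coset t) (map ((\<otimes>) g) \<sigma>) (\<rho> g v)
    = act_chain g (prism_gen (into_coset (coset_rep (inv g \<otimes> t))) \<sigma> v)" for v
    unfolding prism_gen_def using assms
    by (simp add: chain_additive_sum[OF chain_additive_act_chain] act_chain_single rho_alt_sign l
        del: map_map)
  then show "prism (into_coset t) (act_chain g (single \<sigma> (X \<sigma>)))
    = act_chain g (prism (into_coset (coset_rep (inv g \<otimes> t))) (single \<sigma> (X \<sigma>)))"
    using assms by (simp add: act_chain_single prism_single)
qed

lemma supp_in_G_list_prism:
  "finsupp X \<Longrightarrow> supp_in G_list X \<Longrightarrow> t \<in> carrier G \<Longrightarrow> supp_in G_list (prism (into_coset t) X)"
  by (rule supp_in_prism[where P=G_list]) (auto simp: subset_iff dest!: in_set_takeD in_set_dropD)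

text \<open>
  A family of chain maps indexed by the coset representatives whose members are permuted by
  left translation, like \<open>map_chain (into_coset t)\<close> and \<open>prism (into_coset t)\<close>, has a sum that
  is invariant under translation modulo coinvariants.
\<close>

lemma to_bar_sum_shifted_family_act_chain:
  assumes F: "\<And>t. chain_additive (F t)"
    and F_G_list: "\<And>t Y. finsupp Y \<Longrightarrow> supp_in G_list Y \<Longrightarrow> t \<in> carrier G \<Longrightarrow>
      supp_in G_list (F t Y)"
    and F_act: "\<And>t Y. finsupp Y \<Longrightarrow> supp_in G_list Y \<Longrightarrow> t \<in> carrier G \<Longrightarrow>
      F t (act_chain g Y) = act_chain g (F (coset_rep (inv g \<otimes> t)) Y)"
    and X: "finsupp X" "supp_in G_list X" and g: "g \<in> carrier G"
  shows "to_bar (\<Sum>t\<in>coset_reps. F t (act_chain g X)) = to_bar (\<Sum>t\<in>coset_reps. F t X)"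
proof -
  have "to_bar (\<Sum>t\<in>coset_reps. F t (act_chain g X))
      = (\<Sum>t\<in>coset_reps. to_bar (F t (act_chain g X)))"
    using X by (simp add: chain_additive_sum[OF chain_additive_to_bar] chain_additive_finsupp[OF F])
  also have "\<dots> = (\<Sum>t\<in>coset_reps. to_bar (F (coset_rep (inv g \<otimes> t)) X))"
    using X g by (intro sum.cong refl)
      (simp add: F_act F_G_list coset_reps_carrier to_bar_act_chain chain_additive_finsupp[OF F])
  also have "\<dots> = (\<Sum>t\<in>coset_reps. to_bar (F t X))"
    by (rule coset_reps_reindex[OF g])
  also have "\<dots> = to_bar (\<Sum>t\<in>coset_reps. F t X)"
    using X by (simp add: chain_additive_sum[OF chain_additive_to_bar] chain_additive_finsupp[OF F])
  finally show ?thesis .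
qed

lemma to_bar_transfer_hom_act_chain:
  assumes "finsupp X" "supp_in G_list X" "g \<in> carrier G"
  shows "to_bar (transfer_hom (act_chain g X)) = to_bar (transfer_hom X)"
  unfolding transfer_hom_def
  by (rule to_bar_sum_shifted_family_act_chain[OF chain_additive_map_chain _ _ assms])
    (simp_all add: supp_in_G_list_map_chain map_chain_act_chain assms(3))

lemma to_bar_transfer_prism_act_chain:
  assumes "finsupp X" "supp_in G_list X" "g \<in> carrier G"
  shows "to_bar (transfer_prism (act_chain g X)) = to_bar (transfer_prism X)"
  unfolding transfer_prism_def
  by (rule to_bar_sum_shifted_family_act_chain[OF chain_additive_prism _ _ assms])
    (simp_all add: supp_in_G_list_prism prism_act_chain assms(3))

lemma to_hom_to_bar_gen:
  "G_list x \<Longrightarrow> x \<noteq> [] \<Longrightarrow> to_hom (to_bar_gen x v) = act_chain (inv (hd x)) (single x v)"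
proof (cases x)
  case (Cons b rest)
  assume G: "G_list x"
  have "partial_prods \<one> (bar_coords (b # rest)) = map ((\<otimes>) (inv b)) (b # rest)"
    using partial_prods_bar_coords[of \<one> b rest] G Cons by (simp add: subset_iff)
  then show ?thesis using G Cons by (simp add: to_bar_gen_def to_hom_single act_chain_single)
qed simp

text \<open>
  On a generator, \<open>to_hom \<circ> to_bar\<close> is translation by \<open>(hd x)\<inverse>\<close> (\<open>to_hom_to_bar_gen\<close>), so it
  is invisible after any chain map that is invariant modulo coinvariants.
\<close>

lemma to_bar_through_to_hom_to_bar:
  assumes L: "chain_additive L"
    and invL: "\<And>X g. finsupp X \<Longrightarrow> supp_in G_list X \<Longrightarrow> g \<in> carrier G \<Longrightarrow>
      to_bar (L (act_chain g X)) = to_bar (L X)"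
    and nil: "\<And>v. to_bar (L (single [] v)) = 0"
    and X: "finsupp X" "supp_in G_list X"
  shows "to_bar (L (to_hom (to_bar X))) = to_bar (L X)"
proof (rule chain_additive_eqI[OF
      chain_additive_comp[OF chain_additive_to_bar
        chain_additive_comp[OF L
            chain_additive_comp[OF chain_additive_to_hom chain_additive_to_bar]]]
      chain_additive_comp[OF chain_additive_to_bar L] X(1)])
  fix \<sigma> assume "X \<sigma> \<noteq> 0"
  then have G: "G_list \<sigma>" using X by (auto simp: supp_in_def)
  show "to_bar (L (to_hom (to_bar (single \<sigma> (X \<sigma>))))) = to_bar (L (single \<sigma> (X \<sigma>)))"
  proof (cases "\<sigma> = []")
    case True
    then show ?thesis using nil
      by (simp add: to_bar_single to_bar_gen_def chain_additive_zero[OF chain_additive_to_hom]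
          chain_additive_zero[OF L] chain_additive_zero[OF chain_additive_to_bar])
  next
    case False
    then have "hd \<sigma> \<in> carrier G" using G by (cases \<sigma>) auto
    moreover have "supp_in G_list (single \<sigma> (X \<sigma>))" using G by (rule supp_in_single)
    ultimately show ?thesis using G False invL[of "single \<sigma> (X \<sigma>)" "inv (hd \<sigma>)"]
      by (simp add: to_bar_single to_hom_to_bar_gen)
  qed
qed

lemma to_bar_transfer_hom_to_hom_to_bar:
  "finsupp X \<Longrightarrow> supp_in G_list X \<Longrightarrow>
    to_bar (transfer_hom (to_hom (to_bar X))) = to_bar (transfer_hom X)"
  by (rule to_bar_through_to_hom_to_bar[OF chain_additive_transfer_hom to_bar_transfer_hom_act_chain])
    (simp_all add: transfer_hom_single chain_additive_sum[OF chain_additive_to_bar] to_bar_single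
      to_bar_gen_def)

lemma to_bar_transfer_prism_to_hom_to_bar:
  "finsupp X \<Longrightarrow> supp_in G_list X \<Longrightarrow>
    to_bar (transfer_prism (to_hom (to_bar X))) = to_bar (transfer_prism X)"
  by (rule to_bar_through_to_hom_to_bar[OF chain_additive_transfer_prism to_bar_transfer_prism_act_chain])
    (simp_all add: transfer_prism_def prism_single zero_fun_def[symmetric]
      chain_additive_zero[OF chain_additive_to_bar])

lemma to_bar_to_hom:
  assumes "finsupp w" "supp_in G_list w"
  shows "to_bar (to_hom w) = w"
proof -
  have "to_bar (to_hom w) = (\<lambda>c. c) w"
  proof (rule
      chain_additive_eqI[OF chain_additive_comp[OF chain_additive_to_bar chain_additive_to_hom]
        chain_additive_id assms(1)])
    fix \<sigma> assume "w \<sigma> \<noteq> 0"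
    then have "G_list \<sigma>" using assms by (simp add: supp_in_def)
    then show "to_bar (to_hom (single \<sigma> (w \<sigma>))) = single \<sigma> (w \<sigma>)"
      by (simp add: to_hom_single to_bar_single to_bar_gen_def partial_prods_G_list
          bar_coords_partial_prods rho_one)
  qed
  then show ?thesis by simp
qed

lemma hom_bd_transfer_hom: "finsupp Y \<Longrightarrow> hom_bd (transfer_hom Y) = transfer_hom (hom_bd Y)"
  unfolding transfer_hom_def
  by (simp add: chain_additive_sum[OF chain_additive_hom_bd] hom_bd_map_chain)

lemma supp_in_G_list_hom_bd: "finsupp Y \<Longrightarrow> supp_in G_list Y \<Longrightarrow> supp_in G_list (hom_bd Y)"
  by (rule supp_in_hom_bd[where P=G_list]) (auto dest!: in_set_takeD in_set_dropD)

lemma supp_in_G_list_to_hom: "finsupp Y \<Longrightarrow> supp_in G_list Y \<Longrightarrow> supp_in G_list (to_hom Y)"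
  by (rule supp_in_to_hom[where P=G_list]) (auto simp: partial_prods_G_list)

lemma bar_bd_lin_transfer:
  assumes "finsupp w" "supp_in G_list w"
  shows "bar_bd_lin (transfer w) = transfer (bar_bd_lin w)"
proof -
  have S: "finsupp (to_hom w)" "supp_in G_list (to_hom w)" using assms
    by (simp_all add: supp_in_G_list_to_hom)
  have "bar_bd_lin (transfer w) = to_bar (hom_bd (transfer_hom (to_hom w)))"
    unfolding transfer_def using S by (simp add: bar_bd_lin_to_bar supp_in_G_list_transfer_hom)
  also have "\<dots> = to_bar (transfer_hom (hom_bd (to_hom w)))" using S
    by (simp add: hom_bd_transfer_hom)
  also have "\<dots> = to_bar (transfer_hom (to_hom (to_bar (hom_bd (to_hom w)))))"
    using S by (simp add: to_bar_transfer_hom_to_hom_to_bar supp_in_G_list_hom_bd)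
  also have "to_bar (hom_bd (to_hom w)) = bar_bd_lin w"
    using S assms by (simp add: bar_bd_lin_to_bar[symmetric] to_bar_to_hom)
  finally show ?thesis by (simp add: transfer_def)
qed

lemma transfer_prism_homotopy:
  "finsupp Z \<Longrightarrow>
    hom_bd (transfer_prism Z) + transfer_prism (hom_bd Z) = (\<Sum>t\<in>coset_reps. Z) - transfer_hom Z"
  unfolding transfer_prism_def transfer_hom_def
  by (simp add: chain_additive_sum[OF chain_additive_hom_bd] prism_homotopy sum.distrib[symmetric]
      sum_subtractf[symmetric])

text \<open>
  Summing the prism homotopies for the maps \<open>into_coset t\<close> gives a null-homotopy of
  \<open>|T| - transfer\<close>; on a cycle the term through its boundary disappears.
\<close>

lemma bar_bd_lin_transfer_prism:
  assumes "finsupp z" "supp_in G_list z" "bar_bd_lin z = 0"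
  shows "bar_bd_lin (to_bar (transfer_prism (to_hom z))) = (\<Sum>t\<in>coset_reps. z) - transfer z"
proof -
  define Z where "Z = to_hom z"
  have S: "finsupp Z" "supp_in G_list Z" using assms by (simp_all add: supp_in_G_list_to_hom Z_def)
  have DG: "supp_in G_list (transfer_prism Z)"
    by (rule supp_in_transfer_prism[where P=G_list, OF S]) (auto simp: subset_iff coset_reps_carrier
        dest!: in_set_takeD in_set_dropD)
  have "to_bar (hom_bd (transfer_prism Z) + transfer_prism (hom_bd Z))
    = to_bar ((\<Sum>t\<in>coset_reps. Z) - transfer_hom Z)" using transfer_prism_homotopy[OF S(1)] by simp
  then have "to_bar (hom_bd (transfer_prism Z)) + to_bar (transfer_prism (hom_bd Z))
    = (\<Sum>t\<in>coset_reps. to_bar Z) - to_bar (transfer_hom Z)"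
    using S by (simp add: chain_additive_add[OF chain_additive_to_bar]
        chain_additive_diff[OF chain_additive_to_bar] chain_additive_sum[OF chain_additive_to_bar])
  moreover have "to_bar (hom_bd (transfer_prism Z)) = bar_bd_lin (to_bar (transfer_prism Z))"
    using S DG by (simp add: bar_bd_lin_to_bar)
  moreover have "to_bar (transfer_prism (hom_bd Z)) = 0"
  proof -
    have "to_bar (transfer_prism (hom_bd Z)) = to_bar (transfer_prism (to_hom (to_bar (hom_bd Z))))"
      using S by (simp add: to_bar_transfer_prism_to_hom_to_bar supp_in_G_list_hom_bd)
    also have "to_bar (hom_bd Z) = bar_bd_lin (to_bar Z)" using S by (simp add: bar_bd_lin_to_bar)
    also have "to_bar Z = z" using assms by (simp add: Z_def to_bar_to_hom)
    finally show ?thesis using assms(3)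
      by (metis chain_additive_zero[OF chain_additive_to_hom]
          chain_additive_zero[OF chain_additive_transfer_prism] chain_additive_zero[OF
              chain_additive_to_bar])
  qed
  moreover have "to_bar Z = z" using assms by (simp add: Z_def to_bar_to_hom)
  moreover have "to_bar (transfer_hom Z) = transfer z" by (simp add: transfer_def Z_def)
  ultimately show ?thesis by (simp add: Z_def)
qed

definition transfer_coeff :: "'v \<Rightarrow> 'v" where
  "transfer_coeff v = (\<Sum>t\<in>coset_reps. \<rho> (coset_rep (inv t)) v)"

lemma transfer_on_H_chain:
  assumes "finsupp z" "supp_in (\<lambda>\<sigma>. set \<sigma> \<subseteq> H) z"
  shows "transfer z = (\<lambda>\<sigma>. transfer_coeff (z \<sigma>))"
proof (rule chain_additive_eqI[OF chain_additive_transfer _ assms(1)])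
  show "chain_additive (\<lambda>c \<sigma>. transfer_coeff (c \<sigma>))"
    by (rule chain_additive_pointwise) (simp add: transfer_coeff_def rho_add coset_reps_carrier
        sum.distrib)
  fix \<sigma> assume "z \<sigma> \<noteq> 0"
  then have Hs: "set \<sigma> \<subseteq> H" using assms by (simp add: supp_in_def)
  then have Gs: "G_list \<sigma>" using H_sub by blast
  have ppH: "set (partial_prods \<one> \<sigma>) \<subseteq> H" using partial_prods_H[OF H_one Hs] .
  have ppG: "G_list (partial_prods \<one> \<sigma>)" using ppH H_sub by blast
  have tm: "to_bar_gen (map (into_coset t) (partial_prods \<one> \<sigma>)) v
    = single \<sigma> (\<rho> (coset_rep (inv t)) v)" if t: "t \<in> coset_reps" for t v
  proof -
    have tc: "t \<in> carrier G" using coset_reps_carrier t by simp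
    define c where "c = inv (coset_rep (inv t))"
    have c: "c \<in> carrier G" using tc by (simp add: c_def)
    have m: "map (into_coset t) (partial_prods \<one> \<sigma>) = map (\<lambda>y. y \<otimes> c) (partial_prods \<one> \<sigma>)"
      using ppH tc by (auto simp: into_coset_on_H c_def)
    have q: "bar_coords (map (\<lambda>y. y \<otimes> c) (partial_prods \<one> \<sigma>)) = \<sigma>"
      using bar_coords_map_right[OF c ppG] bar_coords_partial_prods[OF one_closed Gs] by simp
    have h: "hd (map (\<lambda>y. y \<otimes> c) (partial_prods \<one> \<sigma>)) = c" using c by (simp add: hd_map)
    have "inv c = coset_rep (inv t)" using tc by (simp add: c_def)
    moreover have "G_list (map (\<lambda>y. y \<otimes> c) (partial_prods \<one> \<sigma>))" using ppG c by auto
    moreover have "map (\<lambda>y. y \<otimes> c) (partial_prods \<one> \<sigma>) \<noteq> []" by simp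
    ultimately show ?thesis unfolding m to_bar_gen_def using q h by simp
  qed
  have "transfer (single \<sigma> (z \<sigma>))
    = (\<Sum>t\<in>coset_reps. to_bar (single (map (into_coset t) (partial_prods \<one> \<sigma>)) (z \<sigma>)))"
    by (simp add: transfer_def to_hom_single transfer_hom_single
        chain_additive_sum[OF chain_additive_to_bar])
  also have "\<dots> = (\<Sum>t\<in>coset_reps. single \<sigma> (\<rho> (coset_rep (inv t)) (z \<sigma>)))"
    by (rule sum.cong) (simp_all add: to_bar_single tm)
  also have "\<dots> = single \<sigma> (transfer_coeff (z \<sigma>))" by (simp add: transfer_coeff_def single_sum)
  also have "\<dots> = (\<lambda>\<tau>. transfer_coeff (single \<sigma> (z \<sigma>) \<tau>))"
    by (rule ext) (simp add: single_def transfer_coeff_def rho_zero coset_reps_carrier)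
  finally show "transfer (single \<sigma> (z \<sigma>)) = (\<lambda>\<tau>. transfer_coeff (single \<sigma> (z \<sigma>) \<tau>))" .
qed

lemma supp_in_transfer:
  assumes "finsupp z" "supp_in (\<lambda>\<sigma>. length \<sigma> = k \<and> G_list \<sigma>) z"
  shows "supp_in (\<lambda>\<sigma>. length \<sigma> = k \<and> set \<sigma> \<subseteq> H) (transfer z)"
proof -
  let ?P1 = "\<lambda>\<sigma>. length \<sigma> = Suc k \<and> G_list \<sigma>"
  let ?P2 = "\<lambda>x. \<exists>y t. t \<in> coset_reps \<and> ?P1 y \<and> x = map (into_coset t) y"
  have s: "supp_in ?P1 (to_hom z)"
    by (rule supp_in_to_hom[OF assms]) (simp add: partial_prods_G_list)
  have transfer_hom: "supp_in ?P2 (transfer_hom (to_hom z))" unfolding transfer_hom_def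
  proof (rule supp_in_sum)
    fix t assume t: "t \<in> coset_reps"
    show "supp_in ?P2 (map_chain (into_coset t) (to_hom z))"
    proof (rule supp_in_chain_additive[OF chain_additive_map_chain finsupp_to_hom[OF assms(1)]])
      fix \<sigma> assume "to_hom z \<sigma> \<noteq> 0"
      then have "?P1 \<sigma>" using s by (simp add: supp_in_def)
      then show "supp_in ?P2 (map_chain (into_coset t) (single \<sigma> (to_hom z \<sigma>)))"
        using t by (auto simp: map_chain_single intro!: supp_in_single)
    qed
  qed
  show ?thesis unfolding transfer_def
  proof (rule supp_in_to_bar[OF _ transfer_hom])
    show "finsupp (transfer_hom (to_hom z))" using assms by simp
    fix x assume "?P2 x"
    then obtain y t where y: "t \<in> coset_reps" "?P1 y" "x = map (into_coset t) y" by blast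
    have tc: "t \<in> carrier G" using y coset_reps_carrier by simp
    have "set (bar_coords x) \<subseteq> H" using y tc
      by (intro bar_coords_in_H) (auto simp: subset_iff intro!: into_coset_quotient_in_H)
    then show "length (bar_coords x) = k \<and> set (bar_coords x) \<subseteq> H" using y by simp
  qed
qed

lemma supp_in_to_bar_transfer_prism:
  assumes "finsupp z" "supp_in (\<lambda>\<sigma>. length \<sigma> = k \<and> G_list \<sigma>) z"
  shows "supp_in (\<lambda>\<sigma>. length \<sigma> = Suc k \<and> G_list \<sigma>) (to_bar (transfer_prism (to_hom z)))"
proof -
  have s: "supp_in (\<lambda>\<sigma>. length \<sigma> = Suc k \<and> G_list \<sigma>) (to_hom z)"
    by (rule supp_in_to_hom[OF assms]) (simp add: partial_prods_G_list)
  have d: "supp_in (\<lambda>\<sigma>. length \<sigma> = Suc (Suc k) \<and> G_list \<sigma>) (transfer_prism (to_hom z))"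
    by (rule supp_in_transfer_prism[OF _ s])
      (use assms in \<open>auto simp: subset_iff coset_reps_carrier dest!: in_set_takeD in_set_dropD\<close>)
  show ?thesis by (rule supp_in_to_bar[OF _ d]) (use assms in \<open>auto simp: bar_coords_G_list\<close>)
qed

section \<open>Comparison of the homology of \<open>H\<close> and of \<open>G\<close>\<close>

definition rep_endo :: "('v \<Rightarrow> 'v) \<Rightarrow> bool" where
  "rep_endo f \<longleftrightarrow> is_add_hom f \<and> (\<forall>g\<in>carrier G. \<forall>v. f (\<rho> g v) = \<rho> g (f v))"

lemma rep_endo_uminus: "rep_endo f \<Longrightarrow> rep_endo (\<lambda>v. - f v)"
  by (simp add: rep_endo_def is_add_hom_def rho_uminus)

lemma rep_endo_funpow: "rep_endo f \<Longrightarrow> rep_endo (f ^^ n)"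
  by (induction n) (auto simp: rep_endo_def is_add_hom_def)

lemma rep_endo_sum: "(\<And>t. t \<in> T \<Longrightarrow> rep_endo (f t)) \<Longrightarrow> rep_endo (\<lambda>v. \<Sum>t\<in>T. f t v)"
  by (auto simp: rep_endo_def is_add_hom_def sum.distrib rho_sum)

lemma bar_face_coeff_rep_endo:
  "rep_endo f \<Longrightarrow> \<sigma> \<noteq> [] \<Longrightarrow> G_list \<sigma> \<Longrightarrow> f (bar_face_coeff \<sigma> i v) = bar_face_coeff \<sigma> i (f v)"
  by (cases \<sigma>) (auto simp: rep_endo_def bar_face_coeff_def alt_sign_def is_add_hom_uminus)

lemma bar_bd_lin_rep_endo:
  assumes f: "rep_endo f" and d: "finsupp d"
  shows "bar_bd_lin (\<lambda>\<sigma>. f (d \<sigma>)) = (\<lambda>\<sigma>. f (bar_bd_lin d \<sigma>))"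
proof -
  have fa: "is_add_hom f"
    using f by (simp add: rep_endo_def)
  have f_single: "f (single \<sigma> v \<tau>) = single \<sigma> (f v) \<tau>" for \<sigma> v \<tau>
    by (simp add: single_def is_add_hom_zero[OF fa])
  have f_single_fun: "(\<lambda>\<tau>. f (single \<sigma> v \<tau>)) = single \<sigma> (f v)" for \<sigma> v
    by (simp add: fun_eq_iff f_single)
  have pointwise: "chain_additive (\<lambda>c \<sigma>. f (c \<sigma>))"
    by (rule chain_additive_pointwise) (use fa in \<open>simp add: is_add_hom_def\<close>)
  have "bar_bd_gen \<sigma> (f v) = (\<lambda>\<tau>. f (bar_bd_gen \<sigma> v \<tau>))" for \<sigma> v
    by (auto simp: bar_bd_gen_def sum_apply is_add_hom_sum[OF fa] is_add_hom_zero[OF fa] f_single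
        bar_face_coeff_rep_endo[OF f])
  then show ?thesis
    by (intro chain_additive_eqI[OF chain_additive_comp[OF chain_additive_bar_bd_lin pointwise]
          chain_additive_comp[OF pointwise chain_additive_bar_bd_lin] d])
      (simp add: f_single_fun bar_bd_lin_single)
qed

lemma hchain_supp_in_G_list: "hchain S k c \<Longrightarrow> S \<subseteq> carrier G \<Longrightarrow> supp_in G_list c"
  by (auto simp: hchain_def supp_in_def)

lemma hcycle_iff_bar_bd_lin:
  "S \<subseteq> carrier G \<Longrightarrow> hcycle G \<rho> S k c \<longleftrightarrow> hchain S k c \<and> bar_bd_lin c = 0"
  by (auto simp: hcycle_def bar_bd_eq_bar_bd_lin zero_fun_def)

lemma hboundary_iff_bar_bd_lin:
  "S \<subseteq> carrier G \<Longrightarrow> hboundary G \<rho> S k c \<longleftrightarrow> (\<exists>d. hchain S (Suc k) d \<and> bar_bd_lin d = c)"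
  by (auto simp: hboundary_def bar_bd_eq_bar_bd_lin)

lemma hchain_rep_endo:
  assumes "rep_endo f" "hchain S k c"
  shows "hchain S k (\<lambda>\<sigma>. f (c \<sigma>))"
proof -
  have "f 0 = 0"
    using assms(1) by (simp add: rep_endo_def is_add_hom_zero)
  then have "{\<sigma>. f (c \<sigma>) \<noteq> 0} \<subseteq> {\<sigma>. c \<sigma> \<noteq> 0}"
    by auto
  then show ?thesis
    using assms(2) finite_subset unfolding hchain_def by blast
qed

lemma hchain_diff:
  assumes "hchain S k a" "hchain S k b"
  shows "hchain S k (a - b)"
proof -
  have "{\<sigma>. (a - b) \<sigma> \<noteq> 0} \<subseteq> {\<sigma>. a \<sigma> \<noteq> 0} \<union> {\<sigma>. b \<sigma> \<noteq> 0}"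
    by auto
  moreover have "finite ({\<sigma>. a \<sigma> \<noteq> 0} \<union> {\<sigma>. b \<sigma> \<noteq> 0})"
    using assms by (simp add: hchain_def)
  ultimately have "finite {\<sigma>. (a - b) \<sigma> \<noteq> 0}"
    by (rule finite_subset)
  moreover have "a \<sigma> \<noteq> 0 \<or> b \<sigma> \<noteq> 0" if "(a - b) \<sigma> \<noteq> 0" for \<sigma>
    using that by auto
  ultimately show ?thesis
    using assms unfolding hchain_def by blast
qed

lemma hboundary_zero: "S \<subseteq> carrier G \<Longrightarrow> hboundary G \<rho> S k 0"
  unfolding hboundary_iff_bar_bd_lin
  by (intro exI[of _ 0]) (simp add: hchain_iff chain_additive_zero[OF chain_additive_bar_bd_lin])

lemma hboundary_rep_endo:
  assumes S: "S \<subseteq> carrier G" and f: "rep_endo f" and x: "hboundary G \<rho> S k x"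
  shows "hboundary G \<rho> S k (\<lambda>\<sigma>. f (x \<sigma>))"
proof -
  obtain d where d: "hchain S (Suc k) d" "bar_bd_lin d = x"
    using x unfolding hboundary_iff_bar_bd_lin[OF S] by blast
  have "bar_bd_lin (\<lambda>\<sigma>. f (d \<sigma>)) = (\<lambda>\<sigma>. f (x \<sigma>))"
    using bar_bd_lin_rep_endo[OF f] d by (simp add: hchain_iff)
  then show ?thesis
    using hchain_rep_endo[OF f d(1)] unfolding hboundary_iff_bar_bd_lin[OF S] by blast
qed

lemma hboundary_diff:
  assumes S: "S \<subseteq> carrier G" and "hboundary G \<rho> S k x" "hboundary G \<rho> S k y"
  shows "hboundary G \<rho> S k (x - y)"
proof -
  obtain d e where d: "hchain S (Suc k) d" "bar_bd_lin d = x"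
    and e: "hchain S (Suc k) e" "bar_bd_lin e = y"
    using assms unfolding hboundary_iff_bar_bd_lin[OF S] by blast
  then have "bar_bd_lin (d - e) = x - y"
    using chain_additive_diff[OF chain_additive_bar_bd_lin] by (simp add: hchain_iff)
  then show ?thesis
    using hchain_diff[OF d(1) e(1)] unfolding hboundary_iff_bar_bd_lin[OF S] by blast
qed

lemma hchain_transfer: "hchain (carrier G) k z \<Longrightarrow> hchain H k (transfer z)"
  using supp_in_transfer by (auto simp: hchain_iff)

lemma hboundary_index_minus_transfer:
  assumes "hcycle G \<rho> (carrier G) k z"
  shows "hboundary G \<rho> (carrier G) k ((\<Sum>t\<in>coset_reps. z) - transfer z)"
proof -
  have z: "hchain (carrier G) k z" "bar_bd_lin z = 0"
    using assms by (auto simp: hcycle_iff_bar_bd_lin)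
  then have "finsupp z" "supp_in (\<lambda>\<sigma>. length \<sigma> = k \<and> G_list \<sigma>) z"
    by (auto simp: hchain_def finsupp_def supp_def supp_in_def)
  then have "hchain (carrier G) (Suc k) (to_bar (transfer_prism (to_hom z)))"
    and "bar_bd_lin (to_bar (transfer_prism (to_hom z))) = (\<Sum>t\<in>coset_reps. z) - transfer z"
    using supp_in_to_bar_transfer_prism bar_bd_lin_transfer_prism[OF _
        hchain_supp_in_G_list[OF z(1) subset_refl] z(2)] by (simp_all add: hchain_iff)
  then show ?thesis
    unfolding hboundary_iff_bar_bd_lin[OF subset_refl] by blast
qed

lemma hcycle_rep_endo_transfer:
  assumes s: "rep_endo s" and z: "hcycle G \<rho> (carrier G) k z"
  shows "hcycle G \<rho> H k (\<lambda>\<sigma>. s (transfer z \<sigma>))"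
proof -
  have zc: "hchain (carrier G) k z" "bar_bd_lin z = 0"
    using z by (auto simp: hcycle_iff_bar_bd_lin)
  have tc: "hchain H k (transfer z)"
    by (rule hchain_transfer[OF zc(1)])
  have "bar_bd_lin (\<lambda>\<sigma>. s (transfer z \<sigma>)) = (\<lambda>\<sigma>. s (bar_bd_lin (transfer z) \<sigma>))"
    using s tc hchain_supp_in_G_list[OF tc H_sub] by (simp add: hchain_iff bar_bd_lin_rep_endo)
  also have "bar_bd_lin (transfer z) = 0"
    using zc hchain_supp_in_G_list[OF zc(1)]
    by (simp add: hchain_iff bar_bd_lin_transfer chain_additive_zero[OF chain_additive_transfer])
  also have "(\<lambda>\<sigma>. s ((0 :: 'g list \<Rightarrow> 'v) \<sigma>)) = 0"
    using s by (simp add: rep_endo_def is_add_hom_zero zero_fun_def)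
  finally show ?thesis
    using hchain_rep_endo[OF s tc] by (simp add: hcycle_iff_bar_bd_lin[OF H_sub])
qed

lemma hcycle_homologous_to_subgroup_cycle:
  assumes s: "rep_endo s" "\<And>v. s (\<Sum>t\<in>coset_reps. v) = v"
    and z: "hcycle G \<rho> (carrier G) k z"
  shows "\<exists>z'. hcycle G \<rho> H k z' \<and> hboundary G \<rho> (carrier G) k (z' - z)"
proof (intro exI conjI)
  show "hcycle G \<rho> H k (\<lambda>\<sigma>. s (transfer z \<sigma>))"
    by (rule hcycle_rep_endo_transfer[OF s(1) z])
  have "hboundary G \<rho> (carrier G) k (\<lambda>\<sigma>. - s (((\<Sum>t\<in>coset_reps. z) - transfer z) \<sigma>))"
    by (rule hboundary_rep_endo[OF subset_refl rep_endo_uminus[OF s(1)]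
          hboundary_index_minus_transfer[OF z]])
  moreover have "(\<lambda>\<sigma>. - s (((\<Sum>t\<in>coset_reps. z) - transfer z) \<sigma>)) = (\<lambda>\<sigma>. s (transfer z \<sigma>)) - z"
    using s by (auto simp: rep_endo_def is_add_hom_diff sum_apply)
  ultimately show "hboundary G \<rho> (carrier G) k ((\<lambda>\<sigma>. s (transfer z \<sigma>)) - z)"
    by simp
qed

lemma transfer_coeff_unipotent_decomp:
  assumes unip: "\<forall>g\<in>carrier G. \<exists>m. (\<lambda>v. \<rho> g v - v) ^^ m = (\<lambda>v. 0)"
  obtains N m where "rep_endo N" "N ^^ m = (\<lambda>v. 0)"
    "\<And>v. transfer_coeff v = N v + (\<Sum>t\<in>coset_reps. v)"
proof -
  define Nt where "Nt = (\<lambda>t v. \<rho> (coset_rep (inv t)) v - v)"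
  define N where "N = (\<lambda>v. \<Sum>t\<in>coset_reps. Nt t v)"
  have rep: "t \<in> coset_reps \<Longrightarrow> coset_rep (inv t) \<in> carrier G" for t
    by (simp add: coset_reps_carrier)
  have Nt: "t \<in> coset_reps \<Longrightarrow> rep_endo (Nt t)" for t
    using rep by (auto simp: rep_endo_def is_add_hom_def Nt_def rho_add rho_diff rho_commute)
  have "\<exists>m. N ^^ m = (\<lambda>v. 0)"
    unfolding N_def
  proof (rule nilpotent_sum_commuting[OF finite_coset_reps])
    show "is_add_hom (Nt t)" if "t \<in> coset_reps" for t
      using Nt[OF that] by (simp add: rep_endo_def)
    show "\<exists>m. Nt t ^^ m = (\<lambda>v. 0)" if "t \<in> coset_reps" for t
      using unip rep[OF that] by (simp add: Nt_def)
    show "Nt s (Nt t x) = Nt t (Nt s x)" if "s \<in> coset_reps" "t \<in> coset_reps" for s t x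
      using rep[OF that(1)] rep[OF that(2)] by (simp add: Nt_def rho_diff rho_commute)
  qed
  moreover have "rep_endo N"
    unfolding N_def by (rule rep_endo_sum) (rule Nt)
  moreover have "transfer_coeff v = N v + (\<Sum>t\<in>coset_reps. v)" for v
    by (simp add: transfer_coeff_def N_def Nt_def sum.distrib[symmetric])
  ultimately show ?thesis
    using that by blast
qed

lemma hboundary_if_transfer_coeff_hboundary:
  assumes s: "rep_endo s" "\<And>v. s (\<Sum>t\<in>coset_reps. v) = v"
    and unip: "\<forall>g\<in>carrier G. \<exists>m. (\<lambda>v. \<rho> g v - v) ^^ m = (\<lambda>v. 0)"
    and Az: "hboundary G \<rho> H k (\<lambda>\<sigma>. transfer_coeff (z \<sigma>))"
  shows "hboundary G \<rho> H k z"
proof -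
  obtain N m where N: "rep_endo N" "N ^^ m = (\<lambda>v. 0)"
    and A_N: "\<And>v. transfer_coeff v = N v + (\<Sum>t\<in>coset_reps. v)"
    using transfer_coeff_unipotent_decomp[OF unip] by blast
  let ?B = "hboundary G \<rho> H k"
  \<comment> \<open>Downward induction: \<open>N\<^sup>p (transfer_coeff v) - N\<^sup>p\<^sup>+\<^sup>1 v = |T| N\<^sup>p v\<close>.\<close>
  have "?B (\<lambda>\<sigma>. (N ^^ (m - j)) (z \<sigma>))" if "j \<le> m" for j
    using that
  proof (induction j)
    case 0
    then show ?case
      using N(2) hboundary_zero[OF H_sub] by (simp add: zero_fun_def)
  next
    case (Suc j)
    define p where "p = m - Suc j"
    have "?B (\<lambda>\<sigma>. (N ^^ p) (transfer_coeff (z \<sigma>)))"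
      by (rule hboundary_rep_endo[OF H_sub rep_endo_funpow[OF N(1)] Az])
    moreover have "?B (\<lambda>\<sigma>. (N ^^ Suc p) (z \<sigma>))"
      using Suc by (simp add: p_def Suc_diff_Suc)
    ultimately have "?B ((\<lambda>\<sigma>. (N ^^ p) (transfer_coeff (z \<sigma>))) - (\<lambda>\<sigma>. (N ^^ Suc p) (z \<sigma>)))"
      by (rule hboundary_diff[OF H_sub])
    moreover have "(\<lambda>\<sigma>. (N ^^ p) (transfer_coeff (z \<sigma>))) - (\<lambda>\<sigma>. (N ^^ Suc p) (z \<sigma>))
        = (\<lambda>\<sigma>. \<Sum>t\<in>coset_reps. (N ^^ p) (z \<sigma>))"
      using rep_endo_funpow[OF N(1), of p]
      by (auto simp: A_N rep_endo_def is_add_hom_sum funpow_Suc_right is_add_hom_def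
          simp del: funpow.simps)
    ultimately have "?B (\<lambda>\<sigma>. s (\<Sum>t\<in>coset_reps. (N ^^ p) (z \<sigma>)))"
      using hboundary_rep_endo[OF H_sub s(1)] by simp
    then show ?case
      using s(2) by (simp add: p_def)
  qed
  from this[of m] show ?thesis
    by simp
qed

lemma subgroup_cycle_bounding_in_G_bounds_in_H:
  assumes s: "rep_endo s" "\<And>v. s (\<Sum>t\<in>coset_reps. v) = v"
    and unip: "\<forall>g\<in>carrier G. \<exists>m. (\<lambda>v. \<rho> g v - v) ^^ m = (\<lambda>v. 0)"
    and z: "hcycle G \<rho> H k z" "hboundary G \<rho> (carrier G) k z"
  shows "hboundary G \<rho> H k z"
proof (rule hboundary_if_transfer_coeff_hboundary[OF s unip])
  obtain w where w: "hchain (carrier G) (Suc k) w" "bar_bd_lin w = z"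
    using z(2) by (auto simp: hboundary_iff_bar_bd_lin)
  have "finsupp z" "supp_in (\<lambda>\<sigma>. set \<sigma> \<subseteq> H) z"
    using z(1) by (auto simp: hcycle_def hchain_def finsupp_def supp_def supp_in_def)
  then have "(\<lambda>\<sigma>. transfer_coeff (z \<sigma>)) = transfer z"
    by (simp add: transfer_on_H_chain)
  also have "\<dots> = bar_bd_lin (transfer w)"
    using w hchain_supp_in_G_list[OF w(1)] by (auto simp: hchain_iff bar_bd_lin_transfer)
  finally show "hboundary G \<rho> H k (\<lambda>\<sigma>. transfer_coeff (z \<sigma>))"
    using hchain_transfer[OF w(1)] by (auto simp: hboundary_iff_bar_bd_lin[OF H_sub])
qed

end

theorem lemma12p4:
  fixes G :: "('g, 'b) monoid_scheme"
    and scale :: "'k::field_char_0 \<Rightarrow> 'v::ab_group_add \<Rightarrow> 'v"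
    and basis :: "'v set"
    and \<rho> :: "'g \<Rightarrow> 'v \<Rightarrow> 'v"
    and H :: "'g set"
  assumes "comm_group G"
    and "finite_dimensional_vector_space scale basis"
    and "\<forall>g\<in>carrier G. Vector_Spaces.linear scale scale (\<rho> g)"
    and "\<forall>g\<in>carrier G. \<forall>h\<in>carrier G. \<rho> (g \<otimes>\<^bsub>G\<^esub> h) = \<rho> g \<circ> \<rho> h"
    and "\<rho> \<one>\<^bsub>G\<^esub> = id"
    and "\<forall>g\<in>carrier G. \<exists>m. ((\<lambda>v. \<rho> g v - v) ^^ m) = (\<lambda>v. 0)"
    and "subgroup H G"
    and "finite (rcosets\<^bsub>G\<^esub> H)"
  shows "\<forall>k. inclusion_induces_iso_Hk G \<rho> H k TYPE('v)"
proof -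
  have md: "module scale"
    using assms(2) by (simp add: finite_dimensional_vector_space_def module_iff_vector_space)
  have mh: "module_hom scale scale (\<rho> g)" if "g \<in> carrier G" for g
    using assms(3) that by (simp add: module_hom_iff_linear)
  interpret abelian_rep_subgroup G \<rho> H
    using assms(1,4,5,7,8) module_hom.add[OF mh]
    by (auto simp: abelian_rep_subgroup_def abelian_rep_subgroup_axioms_def)
  define s where "s = scale (inverse (of_nat (card coset_reps)))"
  have "rep_endo s"
    by (simp add: rep_endo_def is_add_hom_def s_def module.scale_right_distrib[OF md]
        module_hom.scale[OF mh])
  moreover have "s (\<Sum>t\<in>coset_reps. v) = v" for v
    using card_coset_reps_pos
    by (simp add: s_def module.sum_constant_scale[OF md] module.scale_scale[OF md]
        module.scale_one[OF md])
  ultimately show ?thesis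
    unfolding inclusion_induces_iso_Hk_def
    using hcycle_homologous_to_subgroup_cycle subgroup_cycle_bounding_in_G_bounds_in_H assms(6)
    by blast
qed

end
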